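(* Let $\rho,A,E,I,\ell,I_1,I_2,I_3,\varkappa>0$, $\ell_0\ge 0$, $\omega_0\in\mathbb{R}$, and let $\nu_1,\nu_2,\nu_3>0$ be constant gains. Consider the abstract closed-loop system $\dot{\boldsymbol\xi}(t)=F\boldsymbol\xi(t)$ on the Hilbert space $X$ with the nonlinear operator $F:D(F)\to X$ described in the context, and assume (Assumption A1) that the Cauchy problem $\dot{\boldsymbol\xi}=F\boldsymbol\xi$, $\boldsymbol\xi(0)=\boldsymbol\xi_0$, is well-posed on $[0,+\infty)$. Then the equilibrium $$\hat{\boldsymbol\xi}=(0,0,\;0,0,\;-\omega_0,0,0,\;0,0,0,1)^T\in X$$ is stable with respect to the functional $$y(\boldsymbol\xi)=\|w_1\|_{H^2(0,\ell)}+\|w_2\|_{H^2(0,\ell)}+\|v_1\|_{L^2(0,\ell)}+\|v_2\|_{L^2(0,\ell)},$$ that is: for every $\varepsilon>0$ there exists $\delta(\varepsilon)>0$ such that every solution $\boldsymbol\xi(\cdot)$ of $\dot{\boldsymbol\xi}=F\boldsymbol\xi$ on $[0,\infty)$ with $\|\boldsymbol\xi(0)-\hat{\boldsymbol\xi}\|_X<\delta(\varepsilon)$ satisfies $y(\boldsymbol\xi(t))<\varepsilon$ for all $t\ge0$.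
   Context: State space: $X$ is the real Hilbert space of tuples $\boldsymbol\xi=(w_1,v_1,w_2,v_2,\omega_1,\omega_2,\omega_3,q_1,q_2,q_3,q_4)^T$ with $w_1,w_2\in H^2(0,\ell)$, $v_1,v_2\in L^2(0,\ell)$, $\omega_i,q_j\in\mathbb{R}$, and $w_1(0)=w_2(0)=0$, $w_1'(0)=w_2'(0)=0$ (prime = derivative in $\zeta\in[0,\ell]$), with inner product $$\langle\boldsymbol\xi,\bar{\boldsymbol\xi}\rangle_X=\int_0^\ell\Big(\rho A(v_1\bar v_1+v_2\bar v_2)+EI(w_1''\bar w_1''+w_2''\bar w_2'')\Big)d\zeta+\sum_{i=1}^3 I_i\omega_i\bar\omega_i+\varkappa\sum_{j=1}^4 q_j\bar q_j.$$ Functionals: $\gamma_1(v_2)=\int_0^\ell(\zeta+\ell_0)v_2\,d\zeta$, $\gamma_2(v_1)=-\int_0^\ell(\zeta+\ell_0)v_1\,d\zeta$, $\gamma_3(w_1,w_2,v_1,v_2)=\int_0^\ell(w_2v_1-w_1v_2)\,d\zeta$. Domain: $D(F)=\{\boldsymbol\xi\in X: w_j\in H^4(0,\ell),\ w_j(0)=w_j'(0)=0,\ w_j''(\ell)=w_j'''(\ell)=0,\ v_j\in H^2(0,\ell),\ v_j(0)=v_j'(0)=0,\ j=1,2\}$. Operator: $F\boldsymbol\xi$ has components, in order, $v_1$; $-\frac{EI}{\rho A}w_1^{(4)}+2\omega_3v_2+\nu_2(\zeta+\ell_0)\gamma_2(v_1)-\nu_3w_2\gamma_3$; $v_2$; $-\frac{EI}{\rho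 A}w_2^{(4)}-2\omega_3v_1-\nu_1(\zeta+\ell_0)\gamma_1(v_2)+\nu_3w_1\gamma_3$; $\omega_2\omega_3-\nu_1\gamma_1(v_2)$; $-\omega_1\omega_3-\nu_2\gamma_2(v_1)$; $-\nu_3\gamma_3$; $\tfrac12(\omega_3q_2-\omega_2q_3+(\omega_1+\omega_0)q_4)$; $\tfrac12((\omega_1-\omega_0)q_3-\omega_3q_1+\omega_2q_4)$; $\tfrac12(\omega_2q_1-(\omega_1-\omega_0)q_2+\omega_3q_4)$; $-\tfrac12(q_1(\omega_1+\omega_0)+q_2\omega_2+q_3\omega_3)$, where $\gamma_3=\gamma_3(w_1,w_2,v_1,v_2)$ and $w^{(4)}$ is the fourth $\zeta$-derivative. A solution on $[0,\infty)$ means a continuously differentiable map $\boldsymbol\xi:[0,\infty)\to X$ with $\boldsymbol\xi(t)\in D(F)$ and $\dot{\boldsymbol\xi}(t)=F\boldsymbol\xi(t)$ for all $t\ge0$; well-posedness (Assumption A1) means that for each initial datum $\boldsymbol\xi_0$ the Cauchy problem has a unique such solution defined on all of $[0,\infty)$. (This system models a satellite with rigid carrier of principal moments $I_1,I_2,I_3$, orbital rate $\omega_0$, and an Euler–Bernoulli cantilever boom of length $\ell$ attached at distance $\ell_0$, under the feedback control of the paper.) *)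

theory Defs
  imports "HOL-Analysis.Analysis"
begin

record params =
  p_rho :: real
  p_A :: real
  p_E :: real
  p_I :: real
  p_ell :: real
  p_ell0 :: real
  p_I1 :: real
  p_I2 :: real
  p_I3 :: real
  p_kappa :: real
  p_om0 :: real
  p_nu1 :: real
  p_nu2 :: real
  p_nu3 :: real

definition L2 :: "real \<Rightarrow> (real \<Rightarrow> real) \<Rightarrow> bool" where
  "L2 l f \<longleftrightarrow> f measurable_on {0..l} \<and> (\<lambda>x. (f x)^2) integrable_on {0..l}"

text \<open>ds is a chain of Sobolev derivatives of order k of f on [0,l]:
  ds 0 = f, every ds j (j<k) is the indefinite integral of ds (j+1) on [0,l]
  (hence absolutely continuous), and all ds j (j \<le> k) are in L2.\<close>
definition sobolev_derivs :: "real \<Rightarrow> nat \<Rightarrow> (real \<Rightarrow> real) \<Rightarrow> (nat \<Rightarrow> real \<Rightarrow> real) \<Rightarrow> bool" where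
  "sobolev_derivs l k f ds \<longleftrightarrow> ds 0 = f \<and> (\<forall>j\<le>k. L2 l (ds j)) \<and>
     (\<forall>j<k. \<forall>x\<in>{0..l}. ds j x = ds j 0 + integral {0..x} (ds (Suc j)))"

text \<open>f belongs to H^k(0,l) (f being its continuous representative).\<close>
definition in_H :: "nat \<Rightarrow> real \<Rightarrow> (real \<Rightarrow> real) \<Rightarrow> bool" where
  "in_H k l f \<longleftrightarrow> (\<exists>ds. sobolev_derivs l k f ds)"

text \<open>The j-th (weak) derivative of an H^k function: unique pointwise on [0,l] for j<k,
  unique almost everywhere for j = k.\<close>
definition sd :: "real \<Rightarrow> nat \<Rightarrow> (real \<Rightarrow> real) \<Rightarrow> nat \<Rightarrow> real \<Rightarrow> real" where
  "sd l k f = (SOME ds. sobolev_derivs l k f ds)"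

definition L2_norm :: "real \<Rightarrow> (real \<Rightarrow> real) \<Rightarrow> real" where
  "L2_norm l f = sqrt (integral {0..l} (\<lambda>x. (f x)^2))"

definition H2_norm :: "real \<Rightarrow> (real \<Rightarrow> real) \<Rightarrow> real" where
  "H2_norm l f = sqrt (integral {0..l} (\<lambda>x. (f x)^2 + (sd l 2 f 1 x)^2 + (sd l 2 f 2 x)^2))"

record state =
  w1 :: "real \<Rightarrow> real"
  v1 :: "real \<Rightarrow> real"
  w2 :: "real \<Rightarrow> real"
  v2 :: "real \<Rightarrow> real"
  om1 :: real
  om2 :: real
  om3 :: real
  q1 :: real
  q2 :: real
  q3 :: real
  q4 :: real

definition st_diff :: "state \<Rightarrow> state \<Rightarrow> state" where
  "st_diff a b = \<lparr> w1 = (\<lambda>z. w1 a z - w1 b z), v1 = (\<lambda>z. v1 a z - v1 b z),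
     w2 = (\<lambda>z. w2 a z - w2 b z), v2 = (\<lambda>z. v2 a z - v2 b z),
     om1 = om1 a - om1 b, om2 = om2 a - om2 b, om3 = om3 a - om3 b,
     q1 = q1 a - q1 b, q2 = q2 a - q2 b, q3 = q3 a - q3 b, q4 = q4 a - q4 b \<rparr>"

definition st_scale :: "real \<Rightarrow> state \<Rightarrow> state" where
  "st_scale c a = \<lparr> w1 = (\<lambda>z. c * w1 a z), v1 = (\<lambda>z. c * v1 a z),
     w2 = (\<lambda>z. c * w2 a z), v2 = (\<lambda>z. c * v2 a z),
     om1 = c * om1 a, om2 = c * om2 a, om3 = c * om3 a,
     q1 = c * q1 a, q2 = c * q2 a, q3 = c * q3 a, q4 = c * q4 a \<rparr>"

definition in_X :: "params \<Rightarrow> state \<Rightarrow> bool" where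
  "in_X P s \<longleftrightarrow> (let l = p_ell P in
     in_H 2 l (w1 s) \<and> in_H 2 l (w2 s) \<and> L2 l (v1 s) \<and> L2 l (v2 s) \<and>
     w1 s 0 = 0 \<and> w2 s 0 = 0 \<and> sd l 2 (w1 s) 1 0 = 0 \<and> sd l 2 (w2 s) 1 0 = 0)"

definition X_norm :: "params \<Rightarrow> state \<Rightarrow> real" where
  "X_norm P s = (let l = p_ell P in sqrt (
     integral {0..l} (\<lambda>z. p_rho P * p_A P * ((v1 s z)^2 + (v2 s z)^2)
        + p_E P * p_I P * ((sd l 2 (w1 s) 2 z)^2 + (sd l 2 (w2 s) 2 z)^2))
     + p_I1 P * (om1 s)^2 + p_I2 P * (om2 s)^2 + p_I3 P * (om3 s)^2
     + p_kappa P * ((q1 s)^2 + (q2 s)^2 + (q3 s)^2 + (q4 s)^2)))"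

definition in_DF :: "params \<Rightarrow> state \<Rightarrow> bool" where
  "in_DF P s \<longleftrightarrow> in_X P s \<and> (let l = p_ell P in
     in_H 4 l (w1 s) \<and> in_H 4 l (w2 s) \<and>
     w1 s 0 = 0 \<and> w2 s 0 = 0 \<and> sd l 4 (w1 s) 1 0 = 0 \<and> sd l 4 (w2 s) 1 0 = 0 \<and>
     sd l 4 (w1 s) 2 l = 0 \<and> sd l 4 (w1 s) 3 l = 0 \<and>
     sd l 4 (w2 s) 2 l = 0 \<and> sd l 4 (w2 s) 3 l = 0 \<and>
     in_H 2 l (v1 s) \<and> in_H 2 l (v2 s) \<and>
     v1 s 0 = 0 \<and> v2 s 0 = 0 \<and> sd l 2 (v1 s) 1 0 = 0 \<and> sd l 2 (v2 s) 1 0 = 0)"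

definition gamma1 :: "params \<Rightarrow> state \<Rightarrow> real" where
  "gamma1 P s = integral {0..p_ell P} (\<lambda>z. (z + p_ell0 P) * v2 s z)"

definition gamma2 :: "params \<Rightarrow> state \<Rightarrow> real" where
  "gamma2 P s = - integral {0..p_ell P} (\<lambda>z. (z + p_ell0 P) * v1 s z)"

definition gamma3 :: "params \<Rightarrow> state \<Rightarrow> real" where
  "gamma3 P s = integral {0..p_ell P} (\<lambda>z. w2 s z * v1 s z - w1 s z * v2 s z)"

definition Fop :: "params \<Rightarrow> state \<Rightarrow> state" where
  "Fop P s = (let l = p_ell P; c = p_E P * p_I P / (p_rho P * p_A P);
      g1 = gamma1 P s; g2 = gamma2 P s; g3 = gamma3 P s; w0 = p_om0 P in
   \<lparr> w1 = v1 s,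
     v1 = (\<lambda>z. - c * sd l 4 (w1 s) 4 z + 2 * om3 s * v2 s z
             + p_nu2 P * (z + p_ell0 P) * g2 - p_nu3 P * w2 s z * g3),
     w2 = v2 s,
     v2 = (\<lambda>z. - c * sd l 4 (w2 s) 4 z - 2 * om3 s * v1 s z
             - p_nu1 P * (z + p_ell0 P) * g1 + p_nu3 P * w1 s z * g3),
     om1 = om2 s * om3 s - p_nu1 P * g1,
     om2 = - om1 s * om3 s - p_nu2 P * g2,
     om3 = - p_nu3 P * g3,
     q1 = (1/2) * (om3 s * q2 s - om2 s * q3 s + (om1 s + w0) * q4 s),
     q2 = (1/2) * ((om1 s - w0) * q3 s - om3 s * q1 s + om2 s * q4 s),
     q3 = (1/2) * (om2 s * q1 s - (om1 s - w0) * q2 s + om3 s * q4 s),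
     q4 = - (1/2) * (q1 s * (om1 s + w0) + q2 s * om2 s + q3 s * om3 s) \<rparr>)"

definition is_solution :: "params \<Rightarrow> (real \<Rightarrow> state) \<Rightarrow> bool" where
  "is_solution P xi \<longleftrightarrow>
     (\<forall>t\<ge>0. in_DF P (xi t)) \<and>
     (\<forall>t\<ge>0. ((\<lambda>s. X_norm P (st_diff (st_scale (1 / (s - t)) (st_diff (xi s) (xi t)))
                                      (Fop P (xi t)))) \<longlongrightarrow> 0) (at t within {0..})) \<and>
     (\<forall>t\<ge>0. ((\<lambda>s. X_norm P (st_diff (Fop P (xi s)) (Fop P (xi t)))) \<longlongrightarrow> 0)
                (at t within {0..}))"

text \<open>Assumption A1: for each initial datum in D(F) there is a unique solution on
  [0,\<infinity>) (uniqueness as elements of X, i.e. up to X-norm zero).\<close>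
definition well_posed :: "params \<Rightarrow> bool" where
  "well_posed P \<longleftrightarrow> (\<forall>x0. in_DF P x0 \<longrightarrow>
     (\<exists>xi. is_solution P xi \<and> xi 0 = x0) \<and>
     (\<forall>xi eta. is_solution P xi \<and> is_solution P eta \<and> X_norm P (st_diff (xi 0) x0) = 0
        \<and> X_norm P (st_diff (eta 0) x0) = 0 \<longrightarrow> (\<forall>t\<ge>0. X_norm P (st_diff (xi t) (eta t)) = 0)))"

definition xi_hat :: "params \<Rightarrow> state" where
  "xi_hat P = \<lparr> w1 = (\<lambda>z. 0), v1 = (\<lambda>z. 0), w2 = (\<lambda>z. 0), v2 = (\<lambda>z. 0),
     om1 = - p_om0 P, om2 = 0, om3 = 0, q1 = 0, q2 = 0, q3 = 0, q4 = 1 \<rparr>"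

definition y_out :: "params \<Rightarrow> state \<Rightarrow> real" where
  "y_out P s = H2_norm (p_ell P) (w1 s) + H2_norm (p_ell P) (w2 s)
     + L2_norm (p_ell P) (v1 s) + L2_norm (p_ell P) (v2 s)"

end

theory Submission
  imports Defs
begin

text \<open>
  Along solutions the flexible energy
  \<open>E = \<integral>\<^sub>0\<^sup>l \<rho>A (v1\<^sup>2 + v2\<^sup>2) + EI (w1''\<^sup>2 + w2''\<^sup>2)\<close> is nonincreasing.
  Differentiating it and integrating by parts twice, the boundary terms vanish because the beam is
  clamped at 0 and free at l, the elastic terms cancel, the Coriolis terms \<open>2 \<omega>3 v1 v2\<close>
  cancel pointwise, and what remains is \<open>-2\<rho>A (\<nu>1 \<gamma>1\<^sup>2 + \<nu>2 \<gamma>2\<^sup>2 + \<nu>3 \<gamma>3\<^sup>2) \<le> 0\<close>.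
  The equilibrium has no flexible part, so \<open>E(\<xi>(0))\<close> is bounded by the squared X-distance of
  \<open>\<xi>(0)\<close> to the equilibrium, and a Poincare inequality at the clamped end bounds the output
  \<open>y\<close> by a constant times \<open>\<surd>E\<close>.
\<close>

lemma L2_square_integrable: "L2 l f \<Longrightarrow> (\<lambda>x. (f x)^2) integrable_on {0..l}"
  by (simp add: L2_def)

lemma L2_mult_absolutely_integrable:
  assumes "L2 l f" "L2 l g"
  shows "(\<lambda>x. f x * g x) absolutely_integrable_on {0..l}"
proof (rule measurable_bounded_by_integrable_imp_absolutely_integrable)
  have "(\<lambda>x. f x * g x) measurable_on {0..l}"
    using measurable_on_bilinear[OF bilinear_times] assms by (auto simp: L2_def)
  then show "(\<lambda>x. f x * g x) \<in> borel_measurable (lebesgue_on {0..l})"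
    by (simp add: measurable_on_iff_borel_measurable)
  show "(\<lambda>x. ((f x)^2 + (g x)^2) / 2) integrable_on {0..l}"
    using assms by (auto simp: L2_def intro: integrable_add)
  show "norm (f x * g x) \<le> ((f x)^2 + (g x)^2) / 2" for x
    using sum_squares_bound[of "\<bar>f x\<bar>" "\<bar>g x\<bar>"] by (simp add: abs_mult)
qed simp

lemma L2_mult_integrable: "L2 l f \<Longrightarrow> L2 l g \<Longrightarrow> (\<lambda>x. f x * g x) integrable_on {0..l}"
  using L2_mult_absolutely_integrable absolutely_integrable_on_def by blast

lemma continuous_on_imp_L2:
  assumes "continuous_on {0..l} f"
  shows "L2 l f"
proof -
  have "f measurable_on {0..l}"
    using continuous_imp_measurable_on_sets_lebesgue[OF assms]
    by (simp add: measurable_on_iff_borel_measurable)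
  moreover have "(\<lambda>x. (f x)^2) integrable_on {0..l}"
    using assms by (intro integrable_continuous_interval continuous_intros)
  ultimately show ?thesis by (simp add: L2_def)
qed

lemma L2_absolutely_integrable: "L2 l f \<Longrightarrow> f absolutely_integrable_on {0..l}"
  using L2_mult_absolutely_integrable[of l f "\<lambda>_. 1"] continuous_on_imp_L2[of l "\<lambda>_. 1"] by simp

lemma L2_integrable: "L2 l f \<Longrightarrow> f integrable_on {0..l}"
  using L2_absolutely_integrable absolutely_integrable_on_def by blast

lemma L2_add:
  assumes "L2 l f" "L2 l g"
  shows "L2 l (\<lambda>x. f x + g x)"
proof -
  have "(\<lambda>x. (f x)^2 + (g x)^2 + 2 * (f x * g x)) integrable_on {0..l}"
    using assms L2_mult_integrable[OF assms]
    by (intro integrable_add integrable_on_mult_right) (auto simp: L2_def)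
  moreover have "(\<lambda>x. f x + g x) measurable_on {0..l}"
    using assms by (intro measurable_on_add) (auto simp: L2_def)
  ultimately show ?thesis by (simp add: L2_def power2_sum mult.assoc)
qed

lemma L2_cmult:
  assumes "L2 l f"
  shows "L2 l (\<lambda>x. c * f x)"
proof -
  have "(\<lambda>x. c^2 * (f x)^2) integrable_on {0..l}"
    using assms by (intro integrable_on_mult_right) (auto simp: L2_def)
  moreover have "(\<lambda>x. c * f x) measurable_on {0..l}"
    using assms measurable_on_cmul by (auto simp: L2_def)
  ultimately show ?thesis by (simp add: L2_def power_mult_distrib)
qed

lemma L2_diff: "L2 l f \<Longrightarrow> L2 l g \<Longrightarrow> L2 l (\<lambda>x. f x - g x)"
  using L2_add[OF _ L2_cmult[of l g "-1"]] by simp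

lemma abs_integral_le_integral:
  fixes f g :: "'a::euclidean_space \<Rightarrow> real"
  assumes "f integrable_on S" "g integrable_on S" "\<And>x. x \<in> S \<Longrightarrow> \<bar>f x\<bar> \<le> g x"
  shows "\<bar>integral S f\<bar> \<le> integral S g"
  using Henstock_Kurzweil_Integration.integral_norm_bound_integral[OF assms(1,2)] assms(3) by simp

lemma continuous_on_if_indefinite_integral:
  fixes Q q :: "real \<Rightarrow> real"
  assumes "q integrable_on {a..b}" "\<And>x. x \<in> {a..b} \<Longrightarrow> Q x = Q a + integral {a..x} q"
  shows "continuous_on {a..b} Q"
proof -
  have "continuous_on {a..b} (\<lambda>x. Q a + integral {a..x} q)"
    using indefinite_integral_continuous_1[OF assms(1)] by (intro continuous_intros)
  then show ?thesis by (rule continuous_on_eq) (metis assms(2))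
qed

lemma continuous_mult_absolutely_integrable:
  fixes p q :: "real \<Rightarrow> real"
  assumes "continuous_on {a..b} p" "q absolutely_integrable_on {a..b}"
  shows "(\<lambda>t. p t * q t) absolutely_integrable_on {a..b}"
proof (rule absolutely_integrable_bounded_measurable_product_real[OF _ _ _ assms(2)])
  show "p \<in> borel_measurable (lebesgue_on {a..b})"
    using continuous_imp_measurable_on_sets_lebesgue[OF assms(1)] by simp
  show "bounded (p ` {a..b})"
    using compact_continuous_image[OF assms(1)] compact_imp_bounded by blast
qed simp

lemma L2_subinterval:
  assumes f: "L2 l f" and x: "x \<in> {0..l}"
  shows "L2 x f"
proof -
  have "f \<in> borel_measurable (lebesgue_on {0..l})"
    using f by (simp add: L2_def measurable_on_iff_borel_measurable)
  then have "f \<in> borel_measurable (lebesgue_on {0..x})"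
    by (rule measurable_restrict_mono) (use x in auto)
  moreover have "(\<lambda>t. (f t)^2) integrable_on {0..x}"
    using x L2_square_integrable[OF f] by (auto intro: integrable_subinterval_real)
  ultimately show ?thesis by (simp add: L2_def measurable_on_iff_borel_measurable)
qed

section \<open>Sobolev derivative chains\<close>

lemma sobolev_derivs_0: "sobolev_derivs l k f ds \<Longrightarrow> ds 0 = f"
  unfolding sobolev_derivs_def by blast

lemma sobolev_derivs_L2: "sobolev_derivs l k f ds \<Longrightarrow> j \<le> k \<Longrightarrow> L2 l (ds j)"
  unfolding sobolev_derivs_def by blast

lemma sobolev_derivs_integral:
  "sobolev_derivs l k f ds \<Longrightarrow> j < k \<Longrightarrow> x \<in> {0..l} \<Longrightarrow>
   ds j x = ds j 0 + integral {0..x} (ds (Suc j))"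
  unfolding sobolev_derivs_def by blast

lemma sobolev_derivs_mono: "sobolev_derivs l k f ds \<Longrightarrow> m \<le> k \<Longrightarrow> sobolev_derivs l m f ds"
  unfolding sobolev_derivs_def by (meson le_trans less_le_trans)

lemma sobolev_derivs_sd: "in_H k l f \<Longrightarrow> sobolev_derivs l k f (sd l k f)"
  unfolding in_H_def sd_def by (metis someI_ex)

lemma sobolev_derivs_continuous_on:
  assumes "sobolev_derivs l k f ds" "j < k"
  shows "continuous_on {0..l} (ds j)"
proof (rule continuous_on_if_indefinite_integral)
  show "ds (Suc j) integrable_on {0..l}"
    using assms L2_integrable[OF sobolev_derivs_L2[OF assms(1), of "Suc j"]] by simp
  show "ds j x = ds j 0 + integral {0..x} (ds (Suc j))" if "x \<in> {0..l}" for x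
    using sobolev_derivs_integral[OF assms that] .
qed

lemma in_H_continuous_on: "in_H k l f \<Longrightarrow> 0 < k \<Longrightarrow> continuous_on {0..l} f"
  using sobolev_derivs_continuous_on[OF sobolev_derivs_sd, of k l f 0]
    sobolev_derivs_0[OF sobolev_derivs_sd, of k l f] by simp

lemma sobolev_derivs_has_real_derivative:
  assumes "sobolev_derivs l k f ds" "Suc j < k" "x \<in> {0..l}"
  shows "(ds j has_real_derivative ds (Suc j) x) (at x within {0..l})"
proof -
  have "((\<lambda>x. ds j 0 + integral {0..x} (ds (Suc j))) has_real_derivative ds (Suc j) x)
      (at x within {0..l})"
    using integral_has_real_derivative[OF sobolev_derivs_continuous_on[OF assms(1,2)] assms(3)]
    by (intro derivative_eq_intros) auto
  then show ?thesis
  proof (rule has_field_derivative_transform_within[where d=1])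
    show "ds j 0 + integral {0..y} (ds (Suc j)) = ds j y" if "y \<in> {0..l}" for y
      using sobolev_derivs_integral[OF assms(1) _ that, of j] assms(2) by simp
  qed (use assms in auto)
qed

lemma sobolev_derivs_lincomb:
  assumes "sobolev_derivs l k f ds" "sobolev_derivs l k g es"
  shows "sobolev_derivs l k (\<lambda>z. a * f z + b * g z) (\<lambda>j z. a * ds j z + b * es j z)"
  unfolding sobolev_derivs_def
proof (intro conjI allI impI ballI)
  show "(\<lambda>z. a * ds 0 z + b * es 0 z) = (\<lambda>z. a * f z + b * g z)"
    using sobolev_derivs_0[OF assms(1)] sobolev_derivs_0[OF assms(2)] by simp
  show "L2 l (\<lambda>z. a * ds j z + b * es j z)" if "j \<le> k" for j
    using that sobolev_derivs_L2[OF assms(1)] sobolev_derivs_L2[OF assms(2)]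
    by (intro L2_add L2_cmult) auto
next
  fix j x assume j: "j < k" and x: "x \<in> {0..l}"
  have "ds (Suc j) integrable_on {0..x}" "es (Suc j) integrable_on {0..x}"
    using j x L2_integrable[OF sobolev_derivs_L2[OF assms(1), of "Suc j"]]
      L2_integrable[OF sobolev_derivs_L2[OF assms(2), of "Suc j"]]
    by (auto intro: integrable_subinterval_real)
  then show "a * ds j x + b * es j x = a * ds j 0 + b * es j 0 +
      integral {0..x} (\<lambda>z. a * ds (Suc j) z + b * es (Suc j) z)"
    using sobolev_derivs_integral[OF assms(1) j x] sobolev_derivs_integral[OF assms(2) j x]
    by (simp add: integral_add integrable_on_mult_right algebra_simps)
qed

lemma vanishes_if_indefinite_integral_vanishes:
  fixes g :: "real \<Rightarrow> real"
  assumes "0 < l" and g: "continuous_on {0..l} g"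
    and z: "\<And>y. y \<in> {0..l} \<Longrightarrow> integral {0..y} g = 0" and x: "x \<in> {0..l}"
  shows "g x = 0"
proof -
  have "((\<lambda>y. integral {0..y} g) has_real_derivative g x) (at x within {0..l})"
    by (rule integral_has_real_derivative[OF g x])
  moreover have "((\<lambda>y. integral {0..y} g) has_real_derivative 0) (at x within {0..l})"
    by (rule has_field_derivative_transform_within[where d=1 and f="\<lambda>_. 0"]) (use x z in auto)
  ultimately show ?thesis
    using vector_derivative_unique_within_closed_interval[of 0 l x] assms
    unfolding has_real_derivative_iff_has_vector_derivative by (metis cbox_interval)
qed

lemma AE_zero_if_integral_greaterThan_zero:
  fixes h :: "real \<Rightarrow> real"
  assumes hb: "h \<in> borel_measurable lborel" and hi: "integrable lborel h"
    and h0: "\<And>a. (LINT x|lborel. indicator {a<..} x * h x) = 0"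
  shows "AE x in lborel. h x = 0"
proof -
  let ?N1 = "density lborel (\<lambda>x. ennreal (h x))"
  let ?N2 = "density lborel (\<lambda>x. ennreal (- h x))"
  have N: "?N1 = ?N2"
  proof (rule measure_eqI_lessThan)
    show "sets ?N1 = sets borel" "sets ?N2 = sets borel" by auto
    fix a :: real
    let ?f = "\<lambda>x. indicator {a<..} x * h x"
    have fi: "integrable lborel ?f"
      using integrable_mult_indicator[of "{a<..}" lborel h] hi by simp
    have e1: "emeasure ?N1 {a<..} = (\<integral>\<^sup>+ x. ennreal (?f x) \<partial>lborel)"
      using hb by (subst emeasure_density) (auto intro!: nn_integral_cong simp: indicator_def)
    have e2: "emeasure ?N2 {a<..} = (\<integral>\<^sup>+ x. ennreal (- ?f x) \<partial>lborel)"
      using hb by (subst emeasure_density) (auto intro!: nn_integral_cong simp: indicator_def)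
    have fin: "(\<integral>\<^sup>+ x. ennreal (?f x) \<partial>lborel) < top" "(\<integral>\<^sup>+ x. ennreal (- ?f x) \<partial>lborel) < top"
      using integrableD[OF fi] by (simp_all add: less_top[symmetric])
    have "enn2real (\<integral>\<^sup>+ x. ennreal (?f x) \<partial>lborel) = enn2real (\<integral>\<^sup>+ x. ennreal (- ?f x) \<partial>lborel)"
      using real_lebesgue_integral_def[OF fi] h0[of a] by simp
    then have "(\<integral>\<^sup>+ x. ennreal (?f x) \<partial>lborel) = (\<integral>\<^sup>+ x. ennreal (- ?f x) \<partial>lborel)"
      using fin ennreal_enn2real by metis
    then show "emeasure ?N1 {a<..} = emeasure ?N2 {a<..}" using e1 e2 by simp
    show "emeasure ?N1 {a<..} < \<infinity>" using e1 fin by simp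
  qed
  have "AE x in lborel. ennreal (h x) = ennreal (- h x)"
    by (rule sigma_finite_measure.density_unique[OF sigma_finite_lborel _ _ N]) (use hb in auto)
  then show ?thesis
  proof eventually_elim
    case (elim x)
    then show "h x = 0"
      by (cases "0 \<le> h x") (simp_all add: ennreal_eq_0_iff ennreal_neg)
  qed
qed

lemma integral_greaterThan_Int_eq_0:
  fixes g :: "real \<Rightarrow> real"
  assumes gi: "g integrable_on {0..l}" and z: "\<And>x. x \<in> {0..l} \<Longrightarrow> integral {0..x} g = 0"
  shows "integral ({a<..} \<inter> {0..l}) g = 0"
proof (cases "0 \<le> a \<and> a \<le> l")
  case True
  have "{a<..} \<inter> {0..l} = {a<..l}" using True by auto
  moreover have "integral {a<..l} g = integral {a..l} g"
    by (rule integral_spike_set) (auto intro: negligible_subset[OF negligible_sing[of a]])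
  ultimately have "integral ({a<..} \<inter> {0..l}) g = integral {a..l} g" by simp
  also have "\<dots> = integral {0..l} g - integral {0..a} g"
    using Henstock_Kurzweil_Integration.integral_combine[of 0 a l g] gi True by simp
  finally show ?thesis using z True by simp
next
  case False
  show ?thesis
  proof (cases "a < 0")
    case True
    then have "{a<..} \<inter> {0..l} = {0..l}" by auto
    then show ?thesis using z[of l] by (cases "0 \<le> l") auto
  next
    case False
    with \<open>\<not> (0 \<le> a \<and> a \<le> l)\<close> have "{a<..} \<inter> {0..l} = {}" by auto
    then show ?thesis by simp
  qed
qed

lemma negligible_if_indefinite_integral_vanishes:
  fixes g :: "real \<Rightarrow> real"
  assumes ga: "g absolutely_integrable_on {0..l}"
    and z: "\<And>x. x \<in> {0..l} \<Longrightarrow> integral {0..x} g = 0"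
  shows "negligible {x\<in>{0..l}. g x \<noteq> 0}"
proof -
  define G where "G x = indicator {0..l} x * g x" for x
  have Gi: "integrable lebesgue G"
    using ga unfolding set_integrable_def G_def by simp
  have G0: "(LINT x|lebesgue. indicator {a<..} x * G x) = 0" for a
  proof -
    have "(LINT x|lebesgue. indicator {a<..} x * G x)
        = set_lebesgue_integral lebesgue ({a<..} \<inter> {0..l}) g"
      unfolding set_lebesgue_integral_def G_def
      by (intro Bochner_Integration.integral_cong) (auto simp: indicator_def)
    also have "\<dots> = integral ({a<..} \<inter> {0..l}) g"
      by (rule set_lebesgue_integral_eq_integral(2)) (rule set_integrable_subset[OF ga], auto)
    also have "\<dots> = 0"
      using ga z by (intro integral_greaterThan_Int_eq_0) (auto simp: absolutely_integrable_on_def)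
    finally show ?thesis .
  qed
  obtain h where hb: "h \<in> borel_measurable lborel" and hae: "AE x in lborel. G x = h x"
    using completion_ex_borel_measurable_real[of G lborel] Gi by blast
  have hae': "AE x in lebesgue. G x = h x" using AE_completion[OF hae] .
  have hl: "h \<in> borel_measurable lebesgue" using measurable_completion[OF hb] by simp
  have hi: "integrable lborel h"
  proof -
    have "integrable lebesgue h"
      using integrable_cong_AE[OF _ _ hae'] Gi hl by blast
    then show ?thesis using integrable_completion[of h lborel] hb by simp
  qed
  have "(LINT x|lborel. indicator {a<..} x * h x) = 0" for a
  proof -
    have m: "(\<lambda>x. indicator {a<..} x * h x) \<in> borel_measurable lborel" using hb by measurable
    have "(LINT x|lborel. indicator {a<..} x * h x) = (LINT x|lebesgue. indicator {a<..} x * h x)"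
      using integral_completion[OF m] by simp
    also have "\<dots> = (LINT x|lebesgue. indicator {a<..} x * G x)"
    proof (rule integral_cong_AE)
      show "(\<lambda>x. indicator {a<..} x * h x) \<in> borel_measurable lebesgue"
        using hl by (intro borel_measurable_times borel_measurable_indicator) auto
      show "(\<lambda>x. indicator {a<..} x * G x) \<in> borel_measurable lebesgue"
        using Gi by (intro borel_measurable_times borel_measurable_indicator) auto
      show "AE x in lebesgue. indicator {a<..} x * h x = indicator {a<..} x * G x"
        using hae' by eventually_elim simp
    qed
    finally show ?thesis using G0 by simp
  qed
  then have "AE x in lborel. h x = 0"
    by (rule AE_zero_if_integral_greaterThan_zero[OF hb hi])
  then have "AE x in lborel. G x = 0" using hae by eventually_elim simp
  then have "AE x in lebesgue. G x = 0" by (rule AE_completion)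
  moreover have "{x \<in> space lebesgue. G x \<noteq> 0} \<in> sets lebesgue"
    using Gi by measurable
  ultimately have "negligible {x. G x \<noteq> 0}"
    by (simp add: AE_iff_null negligible_iff_null_sets)
  moreover have "{x\<in>{0..l}. g x \<noteq> 0} = {x. G x \<noteq> 0}"
    by (auto simp: G_def indicator_def)
  ultimately show ?thesis by simp
qed

lemma indefinite_integral_diff_sobolev_derivs:
  assumes d: "sobolev_derivs l k f ds" and e: "sobolev_derivs l k f es" and j: "j < k"
    and eq: "\<And>x. x \<in> {0..l} \<Longrightarrow> ds j x = es j x" and x: "x \<in> {0..l}"
  shows "integral {0..x} (\<lambda>z. ds (Suc j) z - es (Suc j) z) = 0"
proof -
  have "ds (Suc j) integrable_on {0..x}" "es (Suc j) integrable_on {0..x}"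
    using x j L2_integrable[OF sobolev_derivs_L2[OF d, of "Suc j"]]
      L2_integrable[OF sobolev_derivs_L2[OF e, of "Suc j"]]
    by (auto intro: integrable_subinterval_real)
  then show ?thesis
    using sobolev_derivs_integral[OF d j x] sobolev_derivs_integral[OF e j x] eq[OF x] eq[of 0] x
    by (simp add: integral_diff)
qed

lemma sobolev_derivs_unique:
  assumes l: "0 < l" and d: "sobolev_derivs l k f ds" and e: "sobolev_derivs l k f es"
  shows "j < k \<Longrightarrow> x \<in> {0..l} \<Longrightarrow> ds j x = es j x"
proof (induction j arbitrary: x)
  case 0
  then show ?case using sobolev_derivs_0[OF d] sobolev_derivs_0[OF e] by simp
next
  case (Suc j)
  have "ds (Suc j) x - es (Suc j) x = 0"
  proof (rule vanishes_if_indefinite_integral_vanishes[OF l _ _ Suc.prems(2)])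
    show "continuous_on {0..l} (\<lambda>z. ds (Suc j) z - es (Suc j) z)"
      using Suc.prems(1) sobolev_derivs_continuous_on[OF d] sobolev_derivs_continuous_on[OF e]
      by (intro continuous_intros) auto
    show "integral {0..y} (\<lambda>z. ds (Suc j) z - es (Suc j) z) = 0" if "y \<in> {0..l}" for y
      using Suc by (intro indefinite_integral_diff_sobolev_derivs[OF d e _ _ that]) auto
  qed
  then show ?case by simp
qed

lemma sobolev_derivs_unique_ae:
  assumes l: "0 < l" and d: "sobolev_derivs l k f ds" and e: "sobolev_derivs l k f es"
    and k: "0 < k"
  shows "negligible {x\<in>{0..l}. ds k x \<noteq> es k x}"
proof -
  obtain j where j: "k = Suc j" using k gr0_conv_Suc by blast
  have "negligible {x\<in>{0..l}. ds k x - es k x \<noteq> 0}"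
  proof (rule negligible_if_indefinite_integral_vanishes)
    show "(\<lambda>x. ds k x - es k x) absolutely_integrable_on {0..l}"
      using sobolev_derivs_L2[OF d] sobolev_derivs_L2[OF e]
      by (intro L2_absolutely_integrable L2_diff) auto
    show "integral {0..x} (\<lambda>x. ds k x - es k x) = 0" if "x \<in> {0..l}" for x
      unfolding j using sobolev_derivs_unique[OF l d e] j that
      by (intro indefinite_integral_diff_sobolev_derivs[OF d e]) auto
  qed
  then show ?thesis by simp
qed

section \<open>Integration by parts against an absolutely continuous factor\<close>

lemma has_real_derivative_zero_if_increment_le:
  fixes \<Phi> K :: "real \<Rightarrow> real"
  assumes K: "continuous_on S K" and x: "x \<in> S"
    and bound: "\<And>y. y \<in> S \<Longrightarrow> \<bar>\<Phi> y - \<Phi> x\<bar> \<le> C * \<bar>y - x\<bar> * \<bar>K y - K x\<bar>"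
  shows "(\<Phi> has_real_derivative 0) (at x within S)"
proof -
  have "((\<lambda>y. C * \<bar>K y - K x\<bar>) \<longlongrightarrow> C * \<bar>K x - K x\<bar>) (at x within S)"
    using K x unfolding continuous_on_def by (intro tendsto_intros) auto
  then have "((\<lambda>y. C * \<bar>K y - K x\<bar>) \<longlongrightarrow> 0) (at x within S)" by simp
  moreover have "\<forall>\<^sub>F y in at x within S. norm ((\<Phi> y - \<Phi> x) / (y - x)) \<le> C * \<bar>K y - K x\<bar>"
    unfolding eventually_at_filter
  proof (intro always_eventually allI impI)
    fix y assume y: "y \<noteq> x" "y \<in> S"
    have "\<bar>\<Phi> y - \<Phi> x\<bar> \<le> C * \<bar>K y - K x\<bar> * \<bar>y - x\<bar>"
      using bound[OF y(2)] by (simp add: ac_simps)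
    then show "norm ((\<Phi> y - \<Phi> x) / (y - x)) \<le> C * \<bar>K y - K x\<bar>"
      using y(1) by (simp add: abs_divide pos_divide_le_eq)
  qed
  ultimately have "((\<lambda>y. (\<Phi> y - \<Phi> x) / (y - x)) \<longlongrightarrow> 0) (at x within S)"
    by (rule Lim_null_comparison[rotated])
  then show ?thesis by (simp add: has_field_derivative_iff)
qed

lemma integration_by_parts_defect_eq:
  fixes P P' q Q :: "real \<Rightarrow> real"
  assumes ab: "a \<le> b"
    and dP: "\<And>x. x \<in> {a..b} \<Longrightarrow> (P has_real_derivative P' x) (at x within {a..b})"
    and cP': "continuous_on {a..b} P'"
    and qa: "q absolutely_integrable_on {a..b}"
    and Qe: "\<And>x. x \<in> {a..b} \<Longrightarrow> Q x = Q a + integral {a..x} q"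
  shows "integral {a..b} (\<lambda>x. P' x * Q x + P x * q x) - (P b * Q b - P a * Q a)
    = integral {a..b} (\<lambda>t. (P t - P b) * q t) + integral {a..b} (\<lambda>t. P' t * (Q t - Q a))"
proof -
  have cP: "continuous_on {a..b} P"
    unfolding continuous_on_eq_continuous_within using dP DERIV_continuous by blast
  have qi: "q integrable_on {a..b}" using qa by (simp add: absolutely_integrable_on_def)
  have cQ: "continuous_on {a..b} Q" using continuous_on_if_indefinite_integral[OF qi Qe] .
  have P'i: "P' integrable_on {a..b}" using cP' by (rule integrable_continuous_interval)
  have i1: "(\<lambda>x. P' x * Q x) integrable_on {a..b}"
    using cP' cQ by (intro integrable_continuous_interval continuous_intros)
  have i2: "(\<lambda>x. P x * q x) integrable_on {a..b}"
    using continuous_mult_absolutely_integrable[OF cP qa] absolutely_integrable_on_def by blast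
  have Pb: "P b = P a + integral {a..b} P'"
  proof -
    have "(P' has_integral (P b - P a)) {a..b}"
      using dP ab by (intro fundamental_theorem_of_calculus)
        (auto simp: has_real_derivative_iff_has_vector_derivative)
    then show ?thesis by (simp add: integral_unique)
  qed
  have "integral {a..b} (\<lambda>t. (P t - P b) * q t) = integral {a..b} (\<lambda>t. P t * q t - P b * q t)"
    by (simp add: algebra_simps)
  also have "\<dots> = integral {a..b} (\<lambda>x. P x * q x) - P b * integral {a..b} q"
    using i2 qi by (simp add: integral_diff integrable_on_mult_right)
  finally have A: "integral {a..b} (\<lambda>t. (P t - P b) * q t)
      = integral {a..b} (\<lambda>x. P x * q x) - P b * integral {a..b} q" .
  have "integral {a..b} (\<lambda>t. P' t * (Q t - Q a)) = integral {a..b} (\<lambda>t. P' t * Q t - Q a * P' t)"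
    by (simp add: algebra_simps)
  also have "\<dots> = integral {a..b} (\<lambda>x. P' x * Q x) - Q a * integral {a..b} P'"
    using i1 P'i by (simp add: integral_diff integrable_on_mult_right)
  finally have B: "integral {a..b} (\<lambda>t. P' t * (Q t - Q a))
      = integral {a..b} (\<lambda>x. P' x * Q x) - Q a * integral {a..b} P'" .
  have Qb: "Q b = Q a + integral {a..b} q" using Qe[of b] ab by simp
  show ?thesis unfolding integral_add[OF i1 i2] A B Qb using Pb by (simp add: algebra_simps)
qed

lemma integration_by_parts_defect_le:
  fixes P P' q Q :: "real \<Rightarrow> real"
  assumes ab: "a \<le> b"
    and dP: "\<And>x. x \<in> {a..b} \<Longrightarrow> (P has_real_derivative P' x) (at x within {a..b})"
    and cP': "continuous_on {a..b} P'" and M: "\<And>x. x \<in> {a..b} \<Longrightarrow> \<bar>P' x\<bar> \<le> M"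
    and qa: "q absolutely_integrable_on {a..b}"
    and Qe: "\<And>x. x \<in> {a..b} \<Longrightarrow> Q x = Q a + integral {a..x} q"
  shows "\<bar>integral {a..b} (\<lambda>x. P' x * Q x + P x * q x) - (P b * Q b - P a * Q a)\<bar>
    \<le> 2 * M * (b - a) * integral {a..b} (\<lambda>x. \<bar>q x\<bar>)"
proof -
  have M0: "0 \<le> M" using M[of a] ab by force
  have cP: "continuous_on {a..b} P"
    unfolding continuous_on_eq_continuous_within using dP DERIV_continuous by blast
  have qi: "q integrable_on {a..b}" and absq: "(\<lambda>x. \<bar>q x\<bar>) integrable_on {a..b}"
    using qa by (simp_all add: absolutely_integrable_on_def)
  have qsub: "q integrable_on {a..x}" "(\<lambda>x. \<bar>q x\<bar>) integrable_on {a..x}" if "x \<in> {a..b}" for x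
    using that integrable_subinterval_real[OF qi] integrable_subinterval_real[OF absq] by auto
  have cQ: "continuous_on {a..b} Q" using continuous_on_if_indefinite_integral[OF qi Qe] .
  define A where "A = integral {a..b} (\<lambda>t. (P t - P b) * q t)"
  define B where "B = integral {a..b} (\<lambda>t. P' t * (Q t - Q a))"
  have "integral {a..b} (\<lambda>x. P' x * Q x + P x * q x) - (P b * Q b - P a * Q a) = A + B"
    unfolding A_def B_def by (rule integration_by_parts_defect_eq[OF ab dP cP' qa Qe])
  moreover have "\<bar>A\<bar> \<le> M * (b - a) * integral {a..b} (\<lambda>x. \<bar>q x\<bar>)"
  proof -
    have "\<bar>A\<bar> \<le> integral {a..b} (\<lambda>t. M * (b - a) * \<bar>q t\<bar>)"
      unfolding A_def
    proof (rule abs_integral_le_integral)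
      show "(\<lambda>t. (P t - P b) * q t) integrable_on {a..b}"
      proof -
        have "continuous_on {a..b} (\<lambda>t. P t - P b)" using cP by (intro continuous_intros)
        then show ?thesis
          using continuous_mult_absolutely_integrable[OF _ qa] absolutely_integrable_on_def by blast
      qed
      show "(\<lambda>t. M * (b - a) * \<bar>q t\<bar>) integrable_on {a..b}"
        using absq by (rule integrable_on_mult_right)
      fix t assume t: "t \<in> {a..b}"
      have "\<bar>P t - P b\<bar> \<le> M * \<bar>t - b\<bar>"
        using field_differentiable_bound[of "{a..b}" P P' M t b] dP M t ab by auto
      also have "\<dots> \<le> M * (b - a)" using t M0 by (intro mult_left_mono) auto
      finally show "\<bar>(P t - P b) * q t\<bar> \<le> M * (b - a) * \<bar>q t\<bar>"
        by (simp add: abs_mult mult_right_mono)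
    qed
    then show ?thesis by simp
  qed
  moreover have "\<bar>B\<bar> \<le> M * (b - a) * integral {a..b} (\<lambda>x. \<bar>q x\<bar>)"
  proof -
    have "\<bar>B\<bar> \<le> integral {a..b} (\<lambda>t. M * integral {a..b} (\<lambda>x. \<bar>q x\<bar>))"
      unfolding B_def
    proof (rule abs_integral_le_integral)
      show "(\<lambda>t. P' t * (Q t - Q a)) integrable_on {a..b}"
        using cP' cQ by (intro integrable_continuous_interval continuous_intros)
      fix t assume t: "t \<in> {a..b}"
      have "\<bar>Q t - Q a\<bar> = \<bar>integral {a..t} q\<bar>" using Qe[OF t] by simp
      also have "\<dots> \<le> integral {a..t} (\<lambda>x. \<bar>q x\<bar>)"
        using qsub[OF t] by (intro abs_integral_le_integral) auto
      also have "\<dots> \<le> integral {a..b} (\<lambda>x. \<bar>q x\<bar>)"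
        using t qsub[OF t] absq by (intro integral_subset_le) auto
      finally show "\<bar>P' t * (Q t - Q a)\<bar> \<le> M * integral {a..b} (\<lambda>x. \<bar>q x\<bar>)"
        using M[OF t] by (simp add: abs_mult mult_mono M0)
    qed (rule integrable_const_ivl)
    then show ?thesis using ab by (simp add: ac_simps)
  qed
  ultimately show ?thesis by linarith
qed

lemma integration_by_parts_absolutely_continuous:
  fixes P P' q Q :: "real \<Rightarrow> real"
  assumes ab: "a \<le> b"
    and dP: "\<And>x. x \<in> {a..b} \<Longrightarrow> (P has_real_derivative P' x) (at x within {a..b})"
    and cP': "continuous_on {a..b} P'"
    and qa: "q absolutely_integrable_on {a..b}"
    and Qe: "\<And>x. x \<in> {a..b} \<Longrightarrow> Q x = Q a + integral {a..x} q"
  shows "integral {a..b} (\<lambda>x. P' x * Q x + P x * q x) = P b * Q b - P a * Q a"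
proof -
  obtain M where M: "\<And>x. x \<in> {a..b} \<Longrightarrow> \<bar>P' x\<bar> \<le> M"
    using compact_continuous_image[OF cP' compact_Icc]
    unfolding compact_eq_bounded_closed bounded_iff by (metis image_eqI real_norm_def)
  have M0: "0 \<le> M" using M[of a] ab by force
  have cP: "continuous_on {a..b} P"
    unfolding continuous_on_eq_continuous_within using dP DERIV_continuous by blast
  have qi: "q integrable_on {a..b}" and absq: "(\<lambda>x. \<bar>q x\<bar>) integrable_on {a..b}"
    using qa by (simp_all add: absolutely_integrable_on_def)
  have cQ: "continuous_on {a..b} Q" using continuous_on_if_indefinite_integral[OF qi Qe] .
  define F where "F x = P' x * Q x + P x * q x" for x
  have "(\<lambda>x. P' x * Q x) integrable_on {a..b}"
    using cP' cQ by (intro integrable_continuous_interval continuous_intros)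
  moreover have "(\<lambda>x. P x * q x) integrable_on {a..b}"
    using continuous_mult_absolutely_integrable[OF cP qa] absolutely_integrable_on_def by blast
  ultimately have Fi: "F integrable_on {a..b}" unfolding F_def by (rule integrable_add)
  define K where "K x = integral {a..x} (\<lambda>t. \<bar>q t\<bar>)" for x
  \<comment> \<open>By the defect bound, \<open>\<Phi>\<close> has increments \<open>o(y - x)\<close> because \<open>K\<close> is continuous, so it is constant.\<close>
  define \<Phi> where "\<Phi> y = integral {a..y} F - P y * Q y" for y
  have increment: "\<bar>\<Phi> y - \<Phi> x\<bar> \<le> 2 * M * (y - x) * (K y - K x)"
    if xy: "x \<in> {a..b}" "y \<in> {a..b}" "x \<le> y" for x y
  proof -
    have sub: "{x..y} \<subseteq> {a..b}" using xy by auto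
    have combine: "integral {a..y} f = integral {a..x} f + integral {x..y} f"
      if "f integrable_on {a..b}" for f :: "real \<Rightarrow> real"
      using xy integrable_subinterval_real[OF that, of a y]
        Henstock_Kurzweil_Integration.integral_combine[of a x y f] by auto
    have "\<bar>integral {x..y} F - (P y * Q y - P x * Q x)\<bar>
        \<le> 2 * M * (y - x) * integral {x..y} (\<lambda>t. \<bar>q t\<bar>)"
      unfolding F_def
    proof (rule integration_by_parts_defect_le[OF xy(3)])
      show "(P has_real_derivative P' t) (at t within {x..y})" if "t \<in> {x..y}" for t
        using dP[of t] that sub by (meson DERIV_subset subsetD)
      show "continuous_on {x..y} P'" using cP' sub by (rule continuous_on_subset)
      show "\<bar>P' t\<bar> \<le> M" if "t \<in> {x..y}" for t using M that sub by blast
      show "q absolutely_integrable_on {x..y}" using set_integrable_subset[OF qa _ sub] by simp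
      show "Q t = Q x + integral {x..t} q" if "t \<in> {x..y}" for t
        using Qe[of t] Qe[of x] that xy integrable_subinterval_real[OF qi, of a t]
          Henstock_Kurzweil_Integration.integral_combine[of a x t q] by auto
    qed
    then show ?thesis
      unfolding \<Phi>_def K_def using combine[OF Fi] combine[OF absq] by (simp add: algebra_simps)
  qed
  have "(\<Phi> has_real_derivative 0) (at x within {a..b})" if x: "x \<in> {a..b}" for x
  proof (rule has_real_derivative_zero_if_increment_le)
    show "continuous_on {a..b} K" unfolding K_def by (rule indefinite_integral_continuous_1[OF absq])
    show "\<bar>\<Phi> y - \<Phi> x\<bar> \<le> 2 * M * \<bar>y - x\<bar> * \<bar>K y - K x\<bar>" if y: "y \<in> {a..b}" for y
    proof (cases "x \<le> y")
      case True
      then show ?thesis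
        using increment[OF x y True] M0 by (smt (verit) abs_ge_self mult_left_mono mult_nonneg_nonneg)
    next
      case False
      then show ?thesis
        using increment[OF y x] M0 by (smt (verit) abs_ge_self abs_minus_commute mult_left_mono mult_nonneg_nonneg)
    qed
  qed (use x in auto)
  then obtain c where "\<And>x. x \<in> {a..b} \<Longrightarrow> \<Phi> x = c"
    using has_field_derivative_zero_constant[of "{a..b}" \<Phi>] by auto
  then have "\<Phi> b = \<Phi> a" using ab by auto
  then show ?thesis unfolding \<Phi>_def F_def by simp
qed

definition L2_family :: "real \<Rightarrow> nat \<Rightarrow> (nat \<Rightarrow> real \<Rightarrow> real) \<Rightarrow> bool" where
  "L2_family l n f \<longleftrightarrow> (\<forall>i<n. L2 l (f i))"

definition wL2_inner ::
  "real \<Rightarrow> nat \<Rightarrow> (nat \<Rightarrow> real) \<Rightarrow> (nat \<Rightarrow> real \<Rightarrow> real) \<Rightarrow> (nat \<Rightarrow> real \<Rightarrow> real) \<Rightarrow> real" where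
  "wL2_inner l n c f g = integral {0..l} (\<lambda>z. \<Sum>i<n. c i * (f i z * g i z))"

definition wL2_sq :: "real \<Rightarrow> nat \<Rightarrow> (nat \<Rightarrow> real) \<Rightarrow> (nat \<Rightarrow> real \<Rightarrow> real) \<Rightarrow> real" where
  "wL2_sq l n c f = integral {0..l} (\<lambda>z. \<Sum>i<n. c i * (f i z)^2)"

lemma L2_family_add: "L2_family l n f \<Longrightarrow> L2_family l n g \<Longrightarrow> L2_family l n (\<lambda>i z. f i z + g i z)"
  by (simp add: L2_family_def L2_add)

lemma L2_family_difference_quotient:
  assumes "L2_family l n f" "L2_family l n g" "L2_family l n f'"
  shows "L2_family l n (\<lambda>i z. (f i z - g i z) / h - f' i z)"
  using assms L2_cmult[OF L2_diff, of l _ _ "inverse h"]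
  by (auto simp: L2_family_def divide_inverse mult.commute intro!: L2_diff)

lemma wL2_inner_integrable:
  "L2_family l n f \<Longrightarrow> L2_family l n g \<Longrightarrow> (\<lambda>z. \<Sum>i<n. c i * (f i z * g i z)) integrable_on {0..l}"
  by (intro integrable_sum integrable_on_mult_right) (auto simp: L2_family_def L2_mult_integrable)

lemma wL2_sq_integrable: "L2_family l n f \<Longrightarrow> (\<lambda>z. \<Sum>i<n. c i * (f i z)^2) integrable_on {0..l}"
  using wL2_inner_integrable[of l n f f c] by (simp add: power2_eq_square)

lemma wL2_sq_nonneg: "(\<And>i. 0 \<le> c i) \<Longrightarrow> 0 \<le> wL2_sq l n c f"
  unfolding wL2_sq_def
  by (cases "(\<lambda>z. \<Sum>i<n. c i * (f i z)^2) integrable_on {0..l}")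
    (auto intro!: integral_nonneg sum_nonneg simp: not_integrable_integral)

lemma abs_le_sqrt_mult_sqrt_of_scaled_bound:
  fixes A B C :: real
  assumes A: "0 \<le> A" and C: "0 \<le> C" and h: "\<And>t. 0 < t \<Longrightarrow> 2 * \<bar>B\<bar> \<le> t * A + C / t"
  shows "\<bar>B\<bar> \<le> sqrt A * sqrt C"
proof (cases "A > 0 \<and> C > 0")
  case True
  define t where "t = sqrt C / sqrt A"
  have "0 < t" "t * A = sqrt A * sqrt C" "C / t = sqrt A * sqrt C"
    using True unfolding t_def by (simp_all add: field_simps)
  then show ?thesis using h[of t] by simp
next
  case False
  have "\<bar>B\<bar> \<le> 0"
  proof (rule ccontr)
    assume "\<not> \<bar>B\<bar> \<le> 0"
    then have B: "0 < \<bar>B\<bar>" by simp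
    show False
    proof (cases "A = 0")
      case True
      have "C / ((C + 1) / \<bar>B\<bar>) < \<bar>B\<bar>" using C B by (simp add: divide_less_eq)
      then show False using h[of "(C + 1) / \<bar>B\<bar>"] True B C by simp
    next
      case False
      then have "C = 0" using \<open>\<not> (A > 0 \<and> C > 0)\<close> A C by auto
      have "\<bar>B\<bar> / (A + 1) * A < \<bar>B\<bar>" using A B by (simp add: divide_less_eq)
      then show False using h[of "\<bar>B\<bar> / (A + 1)"] \<open>C = 0\<close> A B by simp
    qed
  qed
  then show ?thesis using A C by simp
qed

lemma wL2_inner_Cauchy_Schwarz:
  assumes c: "\<And>i. 0 \<le> c i" and f: "L2_family l n f" and g: "L2_family l n g"
  shows "\<bar>wL2_inner l n c f g\<bar> \<le> sqrt (wL2_sq l n c f) * sqrt (wL2_sq l n c g)"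
proof (rule abs_le_sqrt_mult_sqrt_of_scaled_bound[OF wL2_sq_nonneg[OF c] wL2_sq_nonneg[OF c]])
  fix t :: real assume t: "0 < t"
  let ?h = "\<lambda>z. t / 2 * (\<Sum>i<n. c i * (f i z)^2) + 1 / (2 * t) * (\<Sum>i<n. c i * (g i z)^2)"
  have "\<bar>wL2_inner l n c f g\<bar> \<le> integral {0..l} ?h"
    unfolding wL2_inner_def
  proof (rule abs_integral_le_integral[OF wL2_inner_integrable[OF f g]])
    show "?h integrable_on {0..l}"
      using wL2_sq_integrable[OF f] wL2_sq_integrable[OF g]
      by (intro integrable_add integrable_on_mult_right)
    fix z
    have "\<bar>\<Sum>i<n. c i * (f i z * g i z)\<bar> \<le> (\<Sum>i<n. c i * \<bar>f i z * g i z\<bar>)"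
      using sum_abs[of "\<lambda>i. c i * (f i z * g i z)"] c by (simp add: abs_mult)
    also have "\<dots> \<le> (\<Sum>i<n. c i * ((t * (f i z)^2 + (g i z)^2 / t) / 2))"
    proof (intro sum_mono mult_left_mono[OF _ c])
      fix i
      have "0 \<le> (t * \<bar>f i z\<bar> - \<bar>g i z\<bar>)^2" by simp
      then have "2 * t * \<bar>f i z * g i z\<bar> \<le> t^2 * (f i z)^2 + (g i z)^2"
        by (simp add: power2_eq_square algebra_simps abs_mult)
      then show "\<bar>f i z * g i z\<bar> \<le> (t * (f i z)^2 + (g i z)^2 / t) / 2"
        using t by (simp add: field_simps power2_eq_square)
    qed
    also have "\<dots> = (\<Sum>i<n. t / 2 * (c i * (f i z)^2) + 1 / (2 * t) * (c i * (g i z)^2))"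
      using t by (intro sum.cong) (auto simp: field_simps)
    also have "\<dots> = ?h z" by (simp add: sum.distrib sum_distrib_left)
    finally show "\<bar>\<Sum>i<n. c i * (f i z * g i z)\<bar> \<le> ?h z" .
  qed
  also have "\<dots> = (t * wL2_sq l n c f + wL2_sq l n c g / t) / 2"
    unfolding wL2_sq_def using wL2_sq_integrable[OF f, of c] wL2_sq_integrable[OF g, of c]
    using t by (simp add: integral_add integrable_on_mult_right field_simps)
  finally show "2 * \<bar>wL2_inner l n c f g\<bar> \<le> t * wL2_sq l n c f + wL2_sq l n c g / t" by simp
qed

lemma wL2_sq_add_le:
  assumes c: "\<And>i. 0 \<le> c i" and f: "L2_family l n f" and g: "L2_family l n g"
  shows "wL2_sq l n c (\<lambda>i z. f i z + g i z) \<le> 2 * wL2_sq l n c f + 2 * wL2_sq l n c g"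
proof -
  have "wL2_sq l n c (\<lambda>i z. f i z + g i z)
      \<le> integral {0..l} (\<lambda>z. 2 * (\<Sum>i<n. c i * (f i z)^2) + 2 * (\<Sum>i<n. c i * (g i z)^2))"
    unfolding wL2_sq_def
  proof (rule integral_le)
    show "(\<lambda>z. \<Sum>i<n. c i * (f i z + g i z)^2) integrable_on {0..l}"
      using wL2_sq_integrable[OF L2_family_add[OF f g]] by simp
    show "(\<lambda>z. 2 * (\<Sum>i<n. c i * (f i z)^2) + 2 * (\<Sum>i<n. c i * (g i z)^2)) integrable_on {0..l}"
      using wL2_sq_integrable[OF f] wL2_sq_integrable[OF g]
      by (intro integrable_add integrable_on_mult_right)
    fix z
    have "(\<Sum>i<n. c i * (f i z + g i z)^2) \<le> (\<Sum>i<n. c i * (2 * (f i z)^2 + 2 * (g i z)^2))"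
    proof (intro sum_mono mult_left_mono[OF _ c])
      fix i
      have "0 \<le> (f i z - g i z)^2" by simp
      then show "(f i z + g i z)^2 \<le> 2 * (f i z)^2 + 2 * (g i z)^2"
        by (simp add: power2_eq_square algebra_simps)
    qed
    then show "(\<Sum>i<n. c i * (f i z + g i z)^2)
        \<le> 2 * (\<Sum>i<n. c i * (f i z)^2) + 2 * (\<Sum>i<n. c i * (g i z)^2)"
      by (simp add: algebra_simps sum.distrib sum_distrib_left)
  qed
  also have "\<dots> = 2 * wL2_sq l n c f + 2 * wL2_sq l n c g"
    unfolding wL2_sq_def using wL2_sq_integrable[OF f, of c] wL2_sq_integrable[OF g, of c]
    by (simp add: integral_add integrable_on_mult_right)
  finally show ?thesis .
qed

lemma wL2_sq_expand:
  assumes A: "L2_family l n A" and P: "L2_family l n P" and R: "L2_family l n R"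
  shows "wL2_sq l n c (\<lambda>i z. A i z + h * (P i z + R i z)) =
    wL2_sq l n c A + 2 * h * wL2_inner l n c A P + 2 * h * wL2_inner l n c A R
      + h^2 * wL2_sq l n c (\<lambda>i z. P i z + R i z)"
proof -
  let ?S = "\<lambda>i z. P i z + R i z"
  have "(\<lambda>z. \<Sum>i<n. c i * (A i z + h * ?S i z)^2) =
     (\<lambda>z. (\<Sum>i<n. c i * (A i z)^2) + 2 * h * (\<Sum>i<n. c i * (A i z * P i z))
        + 2 * h * (\<Sum>i<n. c i * (A i z * R i z)) + h^2 * (\<Sum>i<n. c i * (?S i z)^2))"
    by (rule ext) (simp add: sum.distrib sum_distrib_left power2_eq_square algebra_simps)
  then show ?thesis
    unfolding wL2_sq_def wL2_inner_def
    using wL2_sq_integrable[OF A, of c] wL2_inner_integrable[OF A P, of c]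
      wL2_inner_integrable[OF A R, of c] wL2_sq_integrable[OF L2_family_add[OF P R], of c]
    by (simp add: integral_add integrable_add integrable_on_mult_right)
qed

lemma has_real_derivative_wL2_sq:
  assumes c: "\<And>i. 0 \<le> c i" and B: "\<And>s. s \<in> S \<Longrightarrow> L2_family l n (B s)" and t: "t \<in> S"
    and B': "L2_family l n B'"
    and lim: "((\<lambda>s. wL2_sq l n c (\<lambda>i z. (B s i z - B t i z) / (s - t) - B' i z)) \<longlongrightarrow> 0)
      (at t within S)"
  shows "((\<lambda>s. wL2_sq l n c (B s)) has_real_derivative 2 * wL2_inner l n c (B t) B')
    (at t within S)"
proof -
  define R where "R s = (\<lambda>i z. (B s i z - B t i z) / (s - t) - B' i z)" for s
  define E where "E s = wL2_sq l n c (B s)" for s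
  have R: "L2_family l n (R s)" if "s \<in> S" for s
    unfolding R_def using B[OF that] B[OF t] B' by (rule L2_family_difference_quotient)
  have bound: "\<bar>(E s - E t) / (s - t) - 2 * wL2_inner l n c (B t) B'\<bar>
      \<le> 2 * (sqrt (wL2_sq l n c (B t)) * sqrt (wL2_sq l n c (R s)))
        + \<bar>s - t\<bar> * (2 * wL2_sq l n c B' + 2 * wL2_sq l n c (R s))"
    if s: "s \<in> S" "s \<noteq> t" for s
  proof -
    \<comment> \<open>Write \<open>B s = B t + (s - t) (B' + R s)\<close> and expand the square.\<close>
    have "B s = (\<lambda>i z. B t i z + (s - t) * (B' i z + R s i z))"
      unfolding R_def using s by (intro ext) (simp add: field_simps)
    then have "E s = E t + 2 * (s - t) * wL2_inner l n c (B t) B'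
        + 2 * (s - t) * wL2_inner l n c (B t) (R s) + (s - t)^2 * wL2_sq l n c (\<lambda>i z. B' i z + R s i z)"
      unfolding E_def using wL2_sq_expand[OF B[OF t] B' R[OF s(1)], of c "s - t"] by simp
    then have eq: "(E s - E t) / (s - t) - 2 * wL2_inner l n c (B t) B'
        = 2 * wL2_inner l n c (B t) (R s) + (s - t) * wL2_sq l n c (\<lambda>i z. B' i z + R s i z)"
      using s by (simp add: field_simps power2_eq_square)
    have "\<bar>2 * wL2_inner l n c (B t) (R s) + (s - t) * wL2_sq l n c (\<lambda>i z. B' i z + R s i z)\<bar>
        \<le> 2 * \<bar>wL2_inner l n c (B t) (R s)\<bar> + \<bar>s - t\<bar> * \<bar>wL2_sq l n c (\<lambda>i z. B' i z + R s i z)\<bar>"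
      by (simp add: abs_mult abs_triangle_ineq[THEN order_trans])
    also have "\<dots> \<le> 2 * (sqrt (wL2_sq l n c (B t)) * sqrt (wL2_sq l n c (R s)))
        + \<bar>s - t\<bar> * (2 * wL2_sq l n c B' + 2 * wL2_sq l n c (R s))"
      using wL2_inner_Cauchy_Schwarz[OF c B[OF t] R[OF s(1)]]
        wL2_sq_add_le[OF c B' R[OF s(1)]] wL2_sq_nonneg[OF c]
      by (intro add_mono mult_left_mono) auto
    finally show ?thesis unfolding eq .
  qed
  have "((\<lambda>s. (E s - E t) / (s - t) - 2 * wL2_inner l n c (B t) B') \<longlongrightarrow> 0) (at t within S)"
  proof (rule Lim_null_comparison)
    show "\<forall>\<^sub>F s in at t within S. norm ((E s - E t) / (s - t) - 2 * wL2_inner l n c (B t) B')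
        \<le> 2 * (sqrt (wL2_sq l n c (B t)) * sqrt (wL2_sq l n c (R s)))
          + \<bar>s - t\<bar> * (2 * wL2_sq l n c B' + 2 * wL2_sq l n c (R s))"
      unfolding eventually_at_filter by (intro always_eventually allI impI) (use bound in auto)
    have "((\<lambda>s. wL2_sq l n c (R s)) \<longlongrightarrow> 0) (at t within S)" using lim unfolding R_def .
    moreover have "((\<lambda>s. s - t) \<longlongrightarrow> 0) (at t within S)"
      by (intro tendsto_eq_intros) auto
    ultimately have "((\<lambda>s. 2 * (sqrt (wL2_sq l n c (B t)) * sqrt (wL2_sq l n c (R s)))
        + \<bar>s - t\<bar> * (2 * wL2_sq l n c B' + 2 * wL2_sq l n c (R s)))
      \<longlongrightarrow> 2 * (sqrt (wL2_sq l n c (B t)) * sqrt 0) + \<bar>0\<bar> * (2 * wL2_sq l n c B' + 2 * 0))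
      (at t within S)"
      by (intro tendsto_intros)
    then show "((\<lambda>s. 2 * (sqrt (wL2_sq l n c (B t)) * sqrt (wL2_sq l n c (R s)))
        + \<bar>s - t\<bar> * (2 * wL2_sq l n c B' + 2 * wL2_sq l n c (R s))) \<longlongrightarrow> 0) (at t within S)"
      by simp
  qed
  then have "((\<lambda>s. (E s - E t) / (s - t)) \<longlongrightarrow> 2 * wL2_inner l n c (B t) B') (at t within S)"
    using Lim_null by blast
  then show ?thesis unfolding E_def by (simp add: has_field_derivative_iff)
qed

section \<open>A Poincare inequality at the clamped end\<close>

lemma square_integral_le_Cauchy_Schwarz:
  assumes "L2 x g" "0 \<le> x"
  shows "(integral {0..x} g)^2 \<le> x * integral {0..x} (\<lambda>t. (g t)^2)"
proof -
  have "L2_family x 1 (\<lambda>_. g)" "L2_family x 1 (\<lambda>_ _. 1)"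
    using assms continuous_on_imp_L2[of x "\<lambda>_. 1"] by (simp_all add: L2_family_def)
  from wL2_inner_Cauchy_Schwarz[where c="\<lambda>_. 1", OF _ this]
  have "\<bar>integral {0..x} g\<bar> \<le> sqrt (integral {0..x} (\<lambda>t. (g t)^2)) * sqrt x"
    using assms by (simp add: wL2_inner_def wL2_sq_def)
  then have "\<bar>integral {0..x} g\<bar>^2 \<le> (sqrt (integral {0..x} (\<lambda>t. (g t)^2)) * sqrt x)^2"
    by (rule power_mono) simp
  moreover have "0 \<le> integral {0..x} (\<lambda>t. (g t)^2)"
    by (rule integral_nonneg[OF L2_square_integrable[OF assms(1)]]) simp
  ultimately show ?thesis
    using assms by (simp add: power_mult_distrib mult.commute)
qed

lemma integral_square_le_if_vanishes_at_0:
  assumes l: "0 \<le> l" and f: "L2 l f" and f': "L2 l f'"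
    and int: "\<And>x. x \<in> {0..l} \<Longrightarrow> f x = integral {0..x} f'"
  shows "integral {0..l} (\<lambda>x. (f x)^2) \<le> l^2 * integral {0..l} (\<lambda>x. (f' x)^2)"
proof -
  have "(f x)^2 \<le> l * integral {0..l} (\<lambda>t. (f' t)^2)" if x: "x \<in> {0..l}" for x
  proof -
    have "(f x)^2 \<le> x * integral {0..x} (\<lambda>t. (f' t)^2)"
      using square_integral_le_Cauchy_Schwarz[OF L2_subinterval[OF f' x]] int[OF x] x by simp
    also have "\<dots> \<le> l * integral {0..l} (\<lambda>t. (f' t)^2)"
    proof (rule mult_mono)
      show "integral {0..x} (\<lambda>t. (f' t)^2) \<le> integral {0..l} (\<lambda>t. (f' t)^2)"
        using x L2_square_integrable[OF f'] integrable_subinterval_real[OF L2_square_integrable[OF f']]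
        by (intro integral_subset_le) auto
      show "0 \<le> integral {0..x} (\<lambda>t. (f' t)^2)"
        using x integrable_subinterval_real[OF L2_square_integrable[OF f']]
        by (intro integral_nonneg) auto
    qed (use x in auto)
    finally show ?thesis .
  qed
  then have "integral {0..l} (\<lambda>x. (f x)^2) \<le> integral {0..l} (\<lambda>x. l * integral {0..l} (\<lambda>t. (f' t)^2))"
    using L2_square_integrable[OF f] by (intro integral_le) auto
  then show ?thesis using l by (simp add: power2_eq_square)
qed

lemma clamped_Poincare_H2:
  assumes l: "0 < l" and d: "sobolev_derivs l 2 f ds" and f0: "f 0 = 0" and d0: "ds 1 0 = 0"
  shows "integral {0..l} (\<lambda>x. (f x)^2 + (ds 1 x)^2 + (ds 2 x)^2)
    \<le> (l^4 + l^2 + 1) * integral {0..l} (\<lambda>x. (ds 2 x)^2)"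
proof -
  have L: "L2 l (ds j)" if "j \<le> 2" for j using sobolev_derivs_L2[OF d that] .
  have h1: "integral {0..l} (\<lambda>x. (ds 1 x)^2) \<le> l^2 * integral {0..l} (\<lambda>x. (ds 2 x)^2)"
  proof (rule integral_square_le_if_vanishes_at_0)
    show "ds 1 x = integral {0..x} (ds 2)" if "x \<in> {0..l}" for x
      using sobolev_derivs_integral[OF d _ that, of 1] d0 by (simp add: numeral_2_eq_2)
  qed (use l L in auto)
  have "integral {0..l} (\<lambda>x. (f x)^2) \<le> l^2 * integral {0..l} (\<lambda>x. (ds 1 x)^2)"
  proof (rule integral_square_le_if_vanishes_at_0)
    show "f x = integral {0..x} (ds 1)" if "x \<in> {0..l}" for x
      using sobolev_derivs_integral[OF d _ that, of 0] f0 sobolev_derivs_0[OF d] by simp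
  qed (use l L[of 0] L[of 1] sobolev_derivs_0[OF d] in auto)
  also have "\<dots> \<le> l^2 * (l^2 * integral {0..l} (\<lambda>x. (ds 2 x)^2))"
    using h1 by (intro mult_left_mono) auto
  finally have h0: "integral {0..l} (\<lambda>x. (f x)^2) \<le> l^4 * integral {0..l} (\<lambda>x. (ds 2 x)^2)"
    by (simp add: power4_eq_xxxx power2_eq_square mult.assoc)
  have "integral {0..l} (\<lambda>x. (f x)^2 + (ds 1 x)^2 + (ds 2 x)^2)
      = integral {0..l} (\<lambda>x. (f x)^2) + integral {0..l} (\<lambda>x. (ds 1 x)^2)
        + integral {0..l} (\<lambda>x. (ds 2 x)^2)"
    using L2_square_integrable[OF L[of 0]] L2_square_integrable[OF L[of 1]]
      L2_square_integrable[OF L[of 2]] sobolev_derivs_0[OF d]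
    by (simp add: integral_add integrable_add)
  with h0 h1 show ?thesis by (simp add: algebra_simps)
qed

lemma H2_norm_le_clamped:
  assumes l: "0 < l" and f: "in_H 2 l f" and "f 0 = 0" "sd l 2 f 1 0 = 0"
  shows "H2_norm l f \<le> sqrt ((l^4 + l^2 + 1) * integral {0..l} (\<lambda>x. (sd l 2 f 2 x)^2))"
  unfolding H2_norm_def using clamped_Poincare_H2[OF l sobolev_derivs_sd[OF f]] assms by simp

lemma sqrt_mult_le_sqrt_div_mult_sqrt:
  fixes K a c E :: real
  assumes "0 \<le> K" "0 < c" "c * a \<le> E"
  shows "sqrt (K * a) \<le> sqrt (K / c) * sqrt E"
proof -
  have "K * a \<le> K / c * E"
    using assms mult_left_mono[of a "E / c" K] by (simp add: field_simps)
  then show ?thesis by (metis real_sqrt_le_mono real_sqrt_mult)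
qed

definition flex_weights :: "params \<Rightarrow> nat \<Rightarrow> real" where
  "flex_weights P i = (if i < 2 then p_rho P * p_A P else p_E P * p_I P)"

definition flex_components :: "params \<Rightarrow> state \<Rightarrow> nat \<Rightarrow> real \<Rightarrow> real" where
  "flex_components P s i = (if i = 0 then v1 s else if i = 1 then v2 s
      else if i = 2 then sd (p_ell P) 2 (w1 s) 2 else sd (p_ell P) 2 (w2 s) 2)"

definition flex_energy :: "params \<Rightarrow> state \<Rightarrow> real" where
  "flex_energy P s = wL2_sq (p_ell P) 4 (flex_weights P) (flex_components P s)"

lemma sum_lessThan_4: "(\<Sum>i<(4::nat). f i) = f 0 + f 1 + f 2 + f 3"
  by (simp add: eval_nat_numeral)

lemma flex_weights_nonneg:
  "p_rho P > 0 \<Longrightarrow> p_A P > 0 \<Longrightarrow> p_E P > 0 \<Longrightarrow> p_I P > 0 \<Longrightarrow> 0 \<le> flex_weights P i"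
  by (simp add: flex_weights_def)

lemma flex_energy_eq:
  "flex_energy P s = integral {0..p_ell P} (\<lambda>z. p_rho P * p_A P * ((v1 s z)^2 + (v2 s z)^2)
     + p_E P * p_I P * ((sd (p_ell P) 2 (w1 s) 2 z)^2 + (sd (p_ell P) 2 (w2 s) 2 z)^2))"
  unfolding flex_energy_def wL2_sq_def
  by (rule arg_cong[where f="integral _"], rule ext)
    (simp add: sum_lessThan_4 flex_weights_def flex_components_def algebra_simps)

lemma flex_energy_le_X_norm:
  assumes "p_rho P > 0" "p_A P > 0" "p_E P > 0" "p_I P > 0"
    "p_I1 P > 0" "p_I2 P > 0" "p_I3 P > 0" "p_kappa P > 0"
  shows "flex_energy P s \<le> (X_norm P s)^2" "sqrt (flex_energy P s) \<le> X_norm P s"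
proof -
  define r where "r = p_I1 P * (om1 s)^2 + p_I2 P * (om2 s)^2 + p_I3 P * (om3 s)^2
     + p_kappa P * ((q1 s)^2 + (q2 s)^2 + (q3 s)^2 + (q4 s)^2)"
  have "0 \<le> flex_energy P s"
    unfolding flex_energy_def using flex_weights_nonneg assms by (intro wL2_sq_nonneg) auto
  moreover have "0 \<le> r" unfolding r_def using assms by (intro add_nonneg_nonneg mult_nonneg_nonneg) auto
  moreover have "X_norm P s = sqrt (flex_energy P s + r)"
    unfolding X_norm_def flex_energy_eq Let_def r_def by (simp add: algebra_simps)
  ultimately show "flex_energy P s \<le> (X_norm P s)^2" "sqrt (flex_energy P s) \<le> X_norm P s"
    by simp_all
qed

lemma in_XD:
  assumes "in_X P s"
  shows "in_H 2 (p_ell P) (w1 s)" "in_H 2 (p_ell P) (w2 s)" "L2 (p_ell P) (v1 s)" "L2 (p_ell P) (v2 s)"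
    "w1 s 0 = 0" "w2 s 0 = 0" "sd (p_ell P) 2 (w1 s) 1 0 = 0" "sd (p_ell P) 2 (w2 s) 1 0 = 0"
  using assms unfolding in_X_def Let_def by auto

lemma in_DFD:
  assumes "in_DF P s"
  shows "in_X P s" "in_H 4 (p_ell P) (w1 s)" "in_H 4 (p_ell P) (w2 s)"
    "sd (p_ell P) 4 (w1 s) 2 (p_ell P) = 0" "sd (p_ell P) 4 (w1 s) 3 (p_ell P) = 0"
    "sd (p_ell P) 4 (w2 s) 2 (p_ell P) = 0" "sd (p_ell P) 4 (w2 s) 3 (p_ell P) = 0"
    "in_H 2 (p_ell P) (v1 s)" "in_H 2 (p_ell P) (v2 s)" "v1 s 0 = 0" "v2 s 0 = 0"
    "sd (p_ell P) 2 (v1 s) 1 0 = 0" "sd (p_ell P) 2 (v2 s) 1 0 = 0"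
  using assms unfolding in_DF_def Let_def by auto

lemma L2_family_flex_components:
  assumes "in_X P s"
  shows "L2_family (p_ell P) 4 (flex_components P s)"
  using in_XD[OF assms] sobolev_derivs_L2[OF sobolev_derivs_sd, of 2 "p_ell P" _ 2]
  by (auto simp: L2_family_def flex_components_def)

lemma y_out_le_flex_energy:
  assumes pos: "p_rho P > 0" "p_A P > 0" "p_E P > 0" "p_I P > 0" "p_ell P > 0"
    and X: "in_X P s"
  shows "y_out P s \<le> (2 * sqrt ((p_ell P^4 + p_ell P^2 + 1) / (p_E P * p_I P))
      + 2 * sqrt (1 / (p_rho P * p_A P))) * sqrt (flex_energy P s)"
proof -
  let ?l = "p_ell P" and ?K = "p_ell P^4 + p_ell P^2 + 1"
  let ?ra = "p_rho P * p_A P" and ?ei = "p_E P * p_I P"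
  note D = in_XD[OF X]
  define S1 where "S1 = integral {0..?l} (\<lambda>x. (sd ?l 2 (w1 s) 2 x)^2)"
  define S2 where "S2 = integral {0..?l} (\<lambda>x. (sd ?l 2 (w2 s) 2 x)^2)"
  define V1 where "V1 = integral {0..?l} (\<lambda>x. (v1 s x)^2)"
  define V2 where "V2 = integral {0..?l} (\<lambda>x. (v2 s x)^2)"
  have i: "(\<lambda>x. (sd ?l 2 (w1 s) 2 x)^2) integrable_on {0..?l}"
    "(\<lambda>x. (sd ?l 2 (w2 s) 2 x)^2) integrable_on {0..?l}"
    "(\<lambda>x. (v1 s x)^2) integrable_on {0..?l}" "(\<lambda>x. (v2 s x)^2) integrable_on {0..?l}"
    using L2_square_integrable sobolev_derivs_L2[OF sobolev_derivs_sd[OF D(1)], of 2]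
      sobolev_derivs_L2[OF sobolev_derivs_sd[OF D(2)], of 2] D(3,4) by auto
  have "0 \<le> S1" "0 \<le> S2" "0 \<le> V1" "0 \<le> V2"
    unfolding S1_def S2_def V1_def V2_def using i by (auto intro!: integral_nonneg)
  moreover have "flex_energy P s = ?ra * (V1 + V2) + ?ei * (S1 + S2)"
    unfolding flex_energy_eq S1_def S2_def V1_def V2_def using i
    by (simp add: integral_add integrable_add integrable_on_mult_right)
  ultimately have "?ei * S1 \<le> flex_energy P s" "?ei * S2 \<le> flex_energy P s"
    "?ra * V1 \<le> flex_energy P s" "?ra * V2 \<le> flex_energy P s"
    using pos by (simp_all add: add_increasing add_increasing2)
  then have "sqrt (?K * S1) \<le> sqrt (?K / ?ei) * sqrt (flex_energy P s)"
    "sqrt (?K * S2) \<le> sqrt (?K / ?ei) * sqrt (flex_energy P s)"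
    "sqrt V1 \<le> sqrt (1 / ?ra) * sqrt (flex_energy P s)"
    "sqrt V2 \<le> sqrt (1 / ?ra) * sqrt (flex_energy P s)"
    using pos sqrt_mult_le_sqrt_div_mult_sqrt[of 1 ?ra] by (auto intro!: sqrt_mult_le_sqrt_div_mult_sqrt)
  moreover have "H2_norm ?l (w1 s) \<le> sqrt (?K * S1)" "H2_norm ?l (w2 s) \<le> sqrt (?K * S2)"
    unfolding S1_def S2_def using H2_norm_le_clamped[OF pos(5)] D by auto
  ultimately show ?thesis unfolding y_out_def L2_norm_def V1_def V2_def by (simp add: algebra_simps)
qed

lemma sd_scaled_diff_minus_ae:
  assumes l: "0 < l" and f: "in_H 2 l f" and g: "in_H 2 l g" and k: "in_H 2 l k"
  shows "negligible {z\<in>{0..l}. sd l 2 (\<lambda>z. a * (f z - g z) - k z) 2 z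
    \<noteq> a * (sd l 2 f 2 z - sd l 2 g 2 z) - sd l 2 k 2 z}"
proof -
  have eq: "(\<lambda>z. 1 * (a * f z + - a * g z) + - 1 * k z) = (\<lambda>z. a * (f z - g z) - k z)"
    by (simp add: fun_eq_iff algebra_simps)
  have C: "sobolev_derivs l 2 (\<lambda>z. a * (f z - g z) - k z)
      (\<lambda>j z. 1 * (a * sd l 2 f j z + - a * sd l 2 g j z) + - 1 * sd l 2 k j z)"
    using sobolev_derivs_lincomb[OF sobolev_derivs_lincomb[OF sobolev_derivs_sd[OF f]
      sobolev_derivs_sd[OF g], of a "-a"] sobolev_derivs_sd[OF k], of 1 "-1"]
    unfolding eq .
  then have "in_H 2 l (\<lambda>z. a * (f z - g z) - k z)" unfolding in_H_def by blast
  from sobolev_derivs_unique_ae[OF l sobolev_derivs_sd[OF this] C]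
  show ?thesis by (simp add: algebra_simps)
qed

lemma w_Fop: "w1 (Fop P s) = v1 s" "w2 (Fop P s) = v2 s"
  by (simp_all add: Fop_def Let_def)

lemma v1_Fop: "v1 (Fop P s) = (\<lambda>z. - (p_E P * p_I P / (p_rho P * p_A P)) * sd (p_ell P) 4 (w1 s) 4 z
     + 2 * om3 s * v2 s z + p_nu2 P * (z + p_ell0 P) * gamma2 P s - p_nu3 P * w2 s z * gamma3 P s)"
  by (simp add: Fop_def Let_def)

lemma v2_Fop: "v2 (Fop P s) = (\<lambda>z. - (p_E P * p_I P / (p_rho P * p_A P)) * sd (p_ell P) 4 (w2 s) 4 z
     - 2 * om3 s * v1 s z - p_nu1 P * (z + p_ell0 P) * gamma1 P s + p_nu3 P * w1 s z * gamma3 P s)"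
  by (simp add: Fop_def Let_def)

lemma L2_family_flex_components_Fop:
  assumes D: "in_DF P s"
  shows "L2_family (p_ell P) 4 (flex_components P (Fop P s))"
proof -
  let ?l = "p_ell P"
  note DD = in_DFD[OF D] and X = in_XD[OF in_DFD(1)[OF D]]
  have D4: "L2 ?l (sd ?l 4 (w1 s) 4)" "L2 ?l (sd ?l 4 (w2 s) 4)"
    using sobolev_derivs_L2[OF sobolev_derivs_sd[OF DD(2)]]
      sobolev_derivs_L2[OF sobolev_derivs_sd[OF DD(3)]] by auto
  have cw: "continuous_on {0..?l} (w1 s)" "continuous_on {0..?l} (w2 s)"
    using in_H_continuous_on X(1,2) by auto
  have t: "L2 ?l (\<lambda>z. p_nu2 P * (z + p_ell0 P) * gamma2 P s)"
    "L2 ?l (\<lambda>z. p_nu1 P * (z + p_ell0 P) * gamma1 P s)"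
    "L2 ?l (\<lambda>z. p_nu3 P * w2 s z * gamma3 P s)" "L2 ?l (\<lambda>z. p_nu3 P * w1 s z * gamma3 P s)"
    using cw by (auto intro!: continuous_on_imp_L2 continuous_intros)
  have "L2 ?l (v1 (Fop P s))" "L2 ?l (v2 (Fop P s))"
    unfolding v1_Fop v2_Fop
    by (rule L2_diff[OF L2_add[OF L2_add[OF L2_cmult[OF D4(1)] L2_cmult[OF X(4)]] t(1)] t(3)],
      rule L2_add[OF L2_diff[OF L2_diff[OF L2_cmult[OF D4(2)] L2_cmult[OF X(3)]] t(2)] t(4)])
  moreover have "L2 ?l (sd ?l 2 (v1 s) 2)" "L2 ?l (sd ?l 2 (v2 s) 2)"
    using sobolev_derivs_L2[OF sobolev_derivs_sd[OF DD(8)]]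
      sobolev_derivs_L2[OF sobolev_derivs_sd[OF DD(9)]] by auto
  ultimately show ?thesis
    unfolding L2_family_def flex_components_def w_Fop by (auto simp: less_Suc_eq numeral_eq_Suc)
qed

lemma is_solution_in_DF: "is_solution P xi \<Longrightarrow> 0 \<le> t \<Longrightarrow> in_DF P (xi t)"
  by (simp add: is_solution_def)

lemma is_solution_difference_quotient:
  "is_solution P xi \<Longrightarrow> 0 \<le> t \<Longrightarrow>
   ((\<lambda>s. X_norm P (st_diff (st_scale (1 / (s - t)) (st_diff (xi s) (xi t))) (Fop P (xi t))))
     \<longlongrightarrow> 0) (at t within {0..})"
  by (simp add: is_solution_def)

lemma flex_energy_difference_quotient:
  assumes l: "0 < p_ell P" and a: "in_X P a" and b: "in_DF P b"
  shows "flex_energy P (st_diff (st_scale (1 / h) (st_diff a b)) (Fop P b))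
    = wL2_sq (p_ell P) 4 (flex_weights P)
        (\<lambda>i z. (flex_components P a i z - flex_components P b i z) / h - flex_components P (Fop P b) i z)"
proof -
  let ?l = "p_ell P"
  define d where "d = st_diff (st_scale (1 / h) (st_diff a b)) (Fop P b)"
  note Xa = in_XD[OF a] and Xb = in_XD[OF in_DFD(1)[OF b]] and Db = in_DFD[OF b]
  have w1d: "w1 d = (\<lambda>z. 1 / h * (w1 a z - w1 b z) - v1 b z)"
    and w2d: "w2 d = (\<lambda>z. 1 / h * (w2 a z - w2 b z) - v2 b z)"
    unfolding d_def by (simp_all add: fun_eq_iff st_diff_def st_scale_def w_Fop)
  define N1 where "N1 = {z\<in>{0..?l}. sd ?l 2 (w1 d) 2 z
    \<noteq> 1 / h * (sd ?l 2 (w1 a) 2 z - sd ?l 2 (w1 b) 2 z) - sd ?l 2 (v1 b) 2 z}"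
  define N2 where "N2 = {z\<in>{0..?l}. sd ?l 2 (w2 d) 2 z
    \<noteq> 1 / h * (sd ?l 2 (w2 a) 2 z - sd ?l 2 (w2 b) 2 z) - sd ?l 2 (v2 b) 2 z}"
  have "negligible N1" "negligible N2"
    unfolding N1_def N2_def w1d w2d
    by (rule sd_scaled_diff_minus_ae[OF l Xa(1) Xb(1) Db(8)],
      rule sd_scaled_diff_minus_ae[OF l Xa(2) Xb(2) Db(9)])
  show ?thesis
    unfolding d_def[symmetric] flex_energy_def wL2_sq_def
  proof (rule integral_spike[OF negligible_Un[OF \<open>negligible N1\<close> \<open>negligible N2\<close>]])
    fix z assume z: "z \<in> {0..?l} - (N1 \<union> N2)"
    have "flex_components P d i z
        = (flex_components P a i z - flex_components P b i z) / h - flex_components P (Fop P b) i z"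
      if "i < 4" for i
    proof -
      have "i = 0 \<or> i = 1 \<or> i = 2 \<or> i = 3" using that by auto
      then show ?thesis
        using z unfolding flex_components_def N1_def N2_def
        by (auto simp: d_def st_diff_def st_scale_def w_Fop divide_inverse algebra_simps)
    qed
    then show "(\<Sum>i<4. flex_weights P i * ((flex_components P a i z - flex_components P b i z) / h
          - flex_components P (Fop P b) i z)^2)
        = (\<Sum>i<4. flex_weights P i * (flex_components P d i z)^2)"
      by (intro sum.cong) auto
  qed
qed

section \<open>Dissipation of the flexible energy\<close>

lemma flex_energy_has_derivative:
  assumes pos: "p_rho P > 0" "p_A P > 0" "p_E P > 0" "p_I P > 0" "p_ell P > 0"
    "p_I1 P > 0" "p_I2 P > 0" "p_I3 P > 0" "p_kappa P > 0"
    and sol: "is_solution P xi" and t: "0 \<le> t"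
  shows "((\<lambda>s. flex_energy P (xi s)) has_real_derivative
    2 * wL2_inner (p_ell P) 4 (flex_weights P) (flex_components P (xi t)) (flex_components P (Fop P (xi t))))
    (at t within {0..})"
  unfolding flex_energy_def
proof (rule has_real_derivative_wL2_sq)
  let ?l = "p_ell P"
  have DF: "in_DF P (xi s)" if "0 \<le> s" for s using is_solution_in_DF[OF sol that] .
  show "0 \<le> flex_weights P i" for i using flex_weights_nonneg pos by auto
  show "L2_family ?l 4 (flex_components P (xi s))" if "s \<in> {0..}" for s
    using that L2_family_flex_components[OF in_DFD(1)[OF DF]] by auto
  show "L2_family ?l 4 (flex_components P (Fop P (xi t)))"
    by (rule L2_family_flex_components_Fop[OF DF[OF t]])
  define d where "d s = st_diff (st_scale (1 / (s - t)) (st_diff (xi s) (xi t))) (Fop P (xi t))" for s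
  show "((\<lambda>s. wL2_sq ?l 4 (flex_weights P) (\<lambda>i z. (flex_components P (xi s) i z
      - flex_components P (xi t) i z) / (s - t) - flex_components P (Fop P (xi t)) i z)) \<longlongrightarrow> 0)
    (at t within {0..})"
  proof (rule Lim_null_comparison)
    have "((\<lambda>s. X_norm P (d s)) \<longlongrightarrow> 0) (at t within {0..})"
      unfolding d_def by (rule is_solution_difference_quotient[OF sol t])
    then show "((\<lambda>s. (X_norm P (d s))^2) \<longlongrightarrow> 0) (at t within {0..})"
      using tendsto_power[of "\<lambda>s. X_norm P (d s)" 0 _ 2] by simp
    show "\<forall>\<^sub>F s in at t within {0..}. norm (wL2_sq ?l 4 (flex_weights P) (\<lambda>i z. (flex_components P (xi s) i z
      - flex_components P (xi t) i z) / (s - t) - flex_components P (Fop P (xi t)) i z)) \<le> (X_norm P (d s))^2"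
      unfolding eventually_at_filter
    proof (intro always_eventually allI impI)
      fix s assume "s \<noteq> t" "s \<in> {0..}"
      then have "wL2_sq ?l 4 (flex_weights P) (\<lambda>i z. (flex_components P (xi s) i z
          - flex_components P (xi t) i z) / (s - t) - flex_components P (Fop P (xi t)) i z)
          = flex_energy P (d s)"
        unfolding d_def using flex_energy_difference_quotient[OF pos(5) in_DFD(1)[OF DF] DF[OF t]]
        by simp
      moreover have "0 \<le> flex_energy P (d s)"
        unfolding flex_energy_def using flex_weights_nonneg pos by (intro wL2_sq_nonneg) auto
      ultimately show "norm (wL2_sq ?l 4 (flex_weights P) (\<lambda>i z. (flex_components P (xi s) i z
          - flex_components P (xi t) i z) / (s - t) - flex_components P (Fop P (xi t)) i z))
          \<le> (X_norm P (d s))^2"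
        using flex_energy_le_X_norm(1)[OF pos(1-4) pos(6-9)] by simp
    qed
  qed
qed (use t in auto)

lemma clamped_free_Green_identity:
  assumes l: "0 < l" and w: "in_H 4 l w" and v: "in_H 2 l v"
    and free: "sd l 4 w 2 l = 0" "sd l 4 w 3 l = 0" and clamped: "v 0 = 0" "sd l 2 v 1 0 = 0"
  shows "integral {0..l} (\<lambda>z. sd l 2 w 2 z * sd l 2 v 2 z) = integral {0..l} (\<lambda>z. sd l 4 w 4 z * v z)"
proof -
  define ds where "ds = sd l 4 w"
  define es where "es = sd l 2 v"
  have d: "sobolev_derivs l 4 w ds" and e: "sobolev_derivs l 2 v es"
    unfolding ds_def es_def using sobolev_derivs_sd w v by auto
  have Ld: "L2 l (ds j)" if "j \<le> 4" for j using sobolev_derivs_L2[OF d that] .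
  have Le: "L2 l (es j)" if "j \<le> 2" for j using sobolev_derivs_L2[OF e that] .
  have d2: "sobolev_derivs l 2 w ds" using sobolev_derivs_mono[OF d] by simp
  then have "in_H 2 l w" unfolding in_H_def by blast
  from sobolev_derivs_unique_ae[OF l sobolev_derivs_sd[OF this] d2]
  have "negligible {z\<in>{0..l}. sd l 2 w 2 z \<noteq> ds 2 z}" by simp
  then have "integral {0..l} (\<lambda>z. sd l 2 w 2 z * es 2 z) = integral {0..l} (\<lambda>z. ds 2 z * es 2 z)"
    by (intro integral_spike[where S="{z\<in>{0..l}. sd l 2 w 2 z \<noteq> ds 2 z}"]) auto
  \<comment> \<open>Integrate by parts twice; all boundary terms vanish.\<close>
  also have "\<dots> = - integral {0..l} (\<lambda>z. ds 3 z * es 1 z)"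
  proof -
    have "integral {0..l} (\<lambda>z. ds 3 z * es 1 z + ds 2 z * es 2 z) = ds 2 l * es 1 l - ds 2 0 * es 1 0"
    proof (rule integration_by_parts_absolutely_continuous)
      show "(ds 2 has_real_derivative ds 3 x) (at x within {0..l})" if "x \<in> {0..l}" for x
        using sobolev_derivs_has_real_derivative[OF d _ that, of 2] by (simp add: eval_nat_numeral)
      show "es 1 x = es 1 0 + integral {0..x} (es 2)" if "x \<in> {0..l}" for x
        using sobolev_derivs_integral[OF e _ that, of 1] by (simp add: numeral_2_eq_2)
    qed (use l sobolev_derivs_continuous_on[OF d, of 3] L2_absolutely_integrable[OF Le] in auto)
    moreover have "(\<lambda>z. ds 3 z * es 1 z) integrable_on {0..l}" "(\<lambda>z. ds 2 z * es 2 z) integrable_on {0..l}"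
      using Ld Le by (auto intro!: L2_mult_integrable)
    ultimately show ?thesis using free clamped unfolding ds_def es_def by (simp add: integral_add)
  qed
  also have "\<dots> = integral {0..l} (\<lambda>z. ds 4 z * es 0 z)"
  proof -
    have "integral {0..l} (\<lambda>z. es 1 z * ds 3 z + es 0 z * ds 4 z) = es 0 l * ds 3 l - es 0 0 * ds 3 0"
    proof (rule integration_by_parts_absolutely_continuous)
      show "(es 0 has_real_derivative es 1 x) (at x within {0..l})" if "x \<in> {0..l}" for x
        using sobolev_derivs_has_real_derivative[OF e _ that, of 0] by simp
      show "ds 3 x = ds 3 0 + integral {0..x} (ds 4)" if "x \<in> {0..l}" for x
        using sobolev_derivs_integral[OF d _ that, of 3] by (simp add: eval_nat_numeral)
    qed (use l sobolev_derivs_continuous_on[OF e, of 1] L2_absolutely_integrable[OF Ld] in auto)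
    moreover have "(\<lambda>z. es 1 z * ds 3 z) integrable_on {0..l}" "(\<lambda>z. es 0 z * ds 4 z) integrable_on {0..l}"
      using Ld Le by (auto intro!: L2_mult_integrable)
    ultimately show ?thesis
      using free clamped sobolev_derivs_0[OF e] unfolding ds_def es_def
      by (simp add: integral_add mult.commute)
  qed
  finally show ?thesis using sobolev_derivs_0[OF e] unfolding ds_def es_def by simp
qed

lemma flex_energy_dissipation:
  assumes pos: "p_rho P > 0" "p_A P > 0" "p_E P > 0" "p_I P > 0" "p_ell P > 0"
    and D: "in_DF P a"
  shows "wL2_inner (p_ell P) 4 (flex_weights P) (flex_components P a) (flex_components P (Fop P a))
    = - (p_rho P * p_A P) * (p_nu1 P * (gamma1 P a)^2 + p_nu2 P * (gamma2 P a)^2 + p_nu3 P * (gamma3 P a)^2)"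
proof -
  let ?l = "p_ell P" and ?ra = "p_rho P * p_A P" and ?ei = "p_E P * p_I P"
  note DD = in_DFD[OF D] and X = in_XD[OF in_DFD(1)[OF D]]
  define g1 where "g1 = gamma1 P a"
  define g2 where "g2 = gamma2 P a"
  define g3 where "g3 = gamma3 P a"
  define D1 where "D1 = sd ?l 4 (w1 a) 4"
  define D2 where "D2 = sd ?l 4 (w2 a) 4"
  define W1 where "W1 = sd ?l 2 (w1 a) 2"
  define W2 where "W2 = sd ?l 2 (w2 a) 2"
  define V1 where "V1 = sd ?l 2 (v1 a) 2"
  define V2 where "V2 = sd ?l 2 (v2 a) 2"
  define k where "k = - ?ra * (?ei / ?ra)"
  have k: "k = - ?ei" unfolding k_def using pos by simp
  have L: "L2 ?l D1" "L2 ?l D2" "L2 ?l (w1 a)" "L2 ?l (w2 a)" "L2 ?l (\<lambda>z. z + p_ell0 P)"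
    unfolding D1_def D2_def
    using sobolev_derivs_L2[OF sobolev_derivs_sd[OF DD(2)]] sobolev_derivs_L2[OF sobolev_derivs_sd[OF DD(3)]]
      in_H_continuous_on[OF X(1)] in_H_continuous_on[OF X(2)]
    by (auto intro!: continuous_on_imp_L2 continuous_intros)
  have "(\<lambda>z. W1 z * V1 z) integrable_on {0..?l}" "(\<lambda>z. W2 z * V2 z) integrable_on {0..?l}"
    unfolding W1_def W2_def V1_def V2_def
    using sobolev_derivs_L2[OF sobolev_derivs_sd[OF X(1)], of 2] sobolev_derivs_L2[OF sobolev_derivs_sd[OF X(2)], of 2]
      sobolev_derivs_L2[OF sobolev_derivs_sd[OF DD(8)], of 2] sobolev_derivs_L2[OF sobolev_derivs_sd[OF DD(9)], of 2]
    by (auto intro!: L2_mult_integrable)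
  then have J1: "((\<lambda>z. W1 z * V1 z) has_integral integral {0..?l} (\<lambda>z. D1 z * v1 a z)) {0..?l}"
    and J2: "((\<lambda>z. W2 z * V2 z) has_integral integral {0..?l} (\<lambda>z. D2 z * v2 a z)) {0..?l}"
    unfolding W1_def W2_def V1_def V2_def D1_def D2_def
      clamped_free_Green_identity[OF pos(5) DD(2) DD(8) DD(4,5) DD(10,12), symmetric]
      clamped_free_Green_identity[OF pos(5) DD(3) DD(9) DD(6,7) DD(11,13), symmetric]
    by (simp_all add: integrable_integral)
  have I1: "((\<lambda>z. D1 z * v1 a z) has_integral integral {0..?l} (\<lambda>z. D1 z * v1 a z)) {0..?l}"
    and I2: "((\<lambda>z. D2 z * v2 a z) has_integral integral {0..?l} (\<lambda>z. D2 z * v2 a z)) {0..?l}"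
    using L X(3,4) by (auto intro!: integrable_integral L2_mult_integrable)
  have G2: "((\<lambda>z. (z + p_ell0 P) * v1 a z) has_integral (- g2)) {0..?l}"
    and G1: "((\<lambda>z. (z + p_ell0 P) * v2 a z) has_integral g1) {0..?l}"
    and G3: "((\<lambda>z. w2 a z * v1 a z - w1 a z * v2 a z) has_integral g3) {0..?l}"
    unfolding g1_def g2_def g3_def gamma1_def gamma2_def gamma3_def
    using L X(3,4) by (auto intro!: integrable_integral L2_mult_integrable integrable_diff)
  \<comment> \<open>Pointwise, the Coriolis terms \<open>2 \<omega>3 v1 v2\<close> cancel.\<close>
  have "(\<lambda>z. \<Sum>i<4. flex_weights P i * (flex_components P a i z * flex_components P (Fop P a) i z))
    = (\<lambda>z. k * (D1 z * v1 a z) + k * (D2 z * v2 a z)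
        + (?ra * p_nu2 P * g2) * ((z + p_ell0 P) * v1 a z) + (- ?ra * p_nu1 P * g1) * ((z + p_ell0 P) * v2 a z)
        + (- ?ra * p_nu3 P * g3) * (w2 a z * v1 a z - w1 a z * v2 a z) + ?ei * (W1 z * V1 z) + ?ei * (W2 z * V2 z))"
    unfolding sum_lessThan_4 flex_weights_def flex_components_def w_Fop v1_Fop v2_Fop k_def
      g1_def g2_def g3_def D1_def D2_def W1_def W2_def V1_def V2_def
    by (simp add: fun_eq_iff algebra_simps)
  moreover have "((\<lambda>z. k * (D1 z * v1 a z) + k * (D2 z * v2 a z)
        + (?ra * p_nu2 P * g2) * ((z + p_ell0 P) * v1 a z) + (- ?ra * p_nu1 P * g1) * ((z + p_ell0 P) * v2 a z)
        + (- ?ra * p_nu3 P * g3) * (w2 a z * v1 a z - w1 a z * v2 a z) + ?ei * (W1 z * V1 z) + ?ei * (W2 z * V2 z))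
      has_integral (k * integral {0..?l} (\<lambda>z. D1 z * v1 a z) + k * integral {0..?l} (\<lambda>z. D2 z * v2 a z)
        + (?ra * p_nu2 P * g2) * (- g2) + (- ?ra * p_nu1 P * g1) * g1 + (- ?ra * p_nu3 P * g3) * g3
        + ?ei * integral {0..?l} (\<lambda>z. D1 z * v1 a z) + ?ei * integral {0..?l} (\<lambda>z. D2 z * v2 a z)))
      {0..?l}"
    by (intro has_integral_add has_integral_mult_right I1 I2 G1 G2 G3 J1 J2)
  ultimately have "((\<lambda>z. \<Sum>i<4. flex_weights P i * (flex_components P a i z * flex_components P (Fop P a) i z))
      has_integral - ?ra * (p_nu1 P * g1^2 + p_nu2 P * g2^2 + p_nu3 P * g3^2)) {0..?l}"
    unfolding k by (simp add: algebra_simps power2_eq_square)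
  then show ?thesis unfolding wL2_inner_def g1_def g2_def g3_def by (rule integral_unique)
qed

lemma flex_energy_antimono:
  assumes pos: "p_rho P > 0" "p_A P > 0" "p_E P > 0" "p_I P > 0" "p_ell P > 0"
    "p_I1 P > 0" "p_I2 P > 0" "p_I3 P > 0" "p_kappa P > 0"
    and nu: "p_nu1 P > 0" "p_nu2 P > 0" "p_nu3 P > 0"
    and sol: "is_solution P xi" and t: "0 \<le> t"
  shows "flex_energy P (xi t) \<le> flex_energy P (xi 0)"
proof -
  let ?E = "\<lambda>s. flex_energy P (xi s)"
  let ?D = "\<lambda>s. 2 * wL2_inner (p_ell P) 4 (flex_weights P) (flex_components P (xi s))
    (flex_components P (Fop P (xi s)))"
  have der: "(?E has_real_derivative ?D s) (at s within {0..})" if "0 \<le> s" for s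
    by (rule flex_energy_has_derivative[OF pos sol that])
  have D: "?D s \<le> 0" if "0 \<le> s" for s
    unfolding flex_energy_dissipation[OF pos(1-5) is_solution_in_DF[OF sol that]]
    using pos nu by (simp add: mult_nonneg_nonneg add_nonneg_nonneg mult_le_0_iff)
  show ?thesis
  proof (rule DERIV_nonpos_imp_decreasing_open[OF t])
    fix x assume x: "0 < x" "x < t"
    have "at x within {0..} = at x" using x by (intro at_within_open_subset[of _ "{0<..}"]) auto
    then show "\<exists>y. DERIV ?E x :> y \<and> y \<le> 0" using der[of x] D[of x] x by auto
  next
    show "continuous_on {0..t} ?E"
      using der DERIV_continuous continuous_within_subset[of _ "{0..}" _ "{0..t}"]
      unfolding continuous_on_eq_continuous_within by (metis atLeastAtMost_iff atLeast_iff subsetI)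
  qed
qed

theorem theorem1:
  fixes P :: params
  assumes "p_rho P > 0" "p_A P > 0" "p_E P > 0" "p_I P > 0" "p_ell P > 0"
    and "p_I1 P > 0" "p_I2 P > 0" "p_I3 P > 0" "p_kappa P > 0"
    and "p_ell0 P \<ge> 0"
    and "p_nu1 P > 0" "p_nu2 P > 0" "p_nu3 P > 0"
    and "well_posed P"
  shows "\<forall>\<epsilon>>0. \<exists>\<delta>>0. \<forall>xi. is_solution P xi \<and> X_norm P (st_diff (xi 0) (xi_hat P)) < \<delta>
           \<longrightarrow> (\<forall>t\<ge>0. y_out P (xi t) < \<epsilon>)"
proof (intro allI impI)
  note pos = assms(1-9) and nu = assms(11-13)
  fix \<epsilon> :: real assume "0 < \<epsilon>"
  define C where "C = 2 * sqrt ((p_ell P^4 + p_ell P^2 + 1) / (p_E P * p_I P)) + 2 * sqrt (1 / (p_rho P * p_A P))"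
  have "0 \<le> C" unfolding C_def using pos by simp
  show "\<exists>\<delta>>0. \<forall>xi. is_solution P xi \<and> X_norm P (st_diff (xi 0) (xi_hat P)) < \<delta>
           \<longrightarrow> (\<forall>t\<ge>0. y_out P (xi t) < \<epsilon>)"
  proof (intro exI[of _ "\<epsilon> / (C + 1)"] conjI allI impI)
    fix xi and t :: real
    assume xi: "is_solution P xi \<and> X_norm P (st_diff (xi 0) (xi_hat P)) < \<epsilon> / (C + 1)" and t: "0 \<le> t"
    have sol: "is_solution P xi" using xi by simp
    \<comment> \<open>The equilibrium has no flexible part.\<close>
    have "flex_components P (st_diff (xi 0) (xi_hat P)) = flex_components P (xi 0)"
      by (simp add: fun_eq_iff flex_components_def st_diff_def xi_hat_def)
    then have "sqrt (flex_energy P (xi 0)) \<le> X_norm P (st_diff (xi 0) (xi_hat P))"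
      using flex_energy_le_X_norm(2)[OF pos(1-4) pos(6-9), of "st_diff (xi 0) (xi_hat P)"]
      by (simp add: flex_energy_def)
    also have "\<dots> < \<epsilon> / (C + 1)" using xi by simp
    finally have E0: "sqrt (flex_energy P (xi 0)) < \<epsilon> / (C + 1)" .
    have "y_out P (xi t) \<le> C * sqrt (flex_energy P (xi t))"
      unfolding C_def by (rule y_out_le_flex_energy[OF pos(1-5) in_DFD(1)[OF is_solution_in_DF[OF sol t]]])
    also have "\<dots> \<le> C * sqrt (flex_energy P (xi 0))"
      using flex_energy_antimono[OF pos nu sol t] \<open>0 \<le> C\<close> by (intro mult_left_mono) auto
    also have "\<dots> \<le> C * (\<epsilon> / (C + 1))" using E0 \<open>0 \<le> C\<close> by (intro mult_left_mono) auto
    also have "\<dots> < \<epsilon>" using \<open>0 < \<epsilon>\<close> \<open>0 \<le> C\<close> by (simp add: field_simps)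
    finally show "y_out P (xi t) < \<epsilon>" .
  qed (use \<open>0 < \<epsilon>\<close> \<open>0 \<le> C\<close> in simp)
qed

end
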